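(* If $X\subset\mathbb{R}^2$ is a planar self-affine set whose tuple of linear parts is dominated or irreducible, then $\mathcal{H}^s(X)<\infty$ where $s=\dim_{\mathrm{aff}}(X)$.
   Context: An affine iterated function system is a tuple $(\varphi_1,\dots,\varphi_N)$, $N\ge2$, with $\varphi_i(x)=A_ix+v_i$, $A_i\in GL_2(\mathbb{R})$, $\|A_i\|<1$; its self-affine set $X$ is the unique nonempty compact set with $X=\bigcup_i\varphi_i(X)$; properties of $\mathsf{A}=(A_1,\dots,A_N)$ are attributed to $X$. For $\mathtt{i}=i_1\cdots i_n$, $A_{\mathtt{i}}=A_{i_1}\cdots A_{i_n}$; $\Sigma_n$ is the set of words of length $n$, $\Sigma_*$ all finite words; $\alpha_1\ge\alpha_2$ singular values. Dominated: $\exists C>0,0<\tau<1$ with $\alpha_2(A_{\mathtt{i}})\le C\tau^{|\mathtt{i}|}\alpha_1(A_{\mathtt{i}})$ for all $\mathtt{i}\in\Sigma_*$. Irreducible: no line through the origin invariant under all $A_i$. Singular value function: $\varphi^s(A)=\alpha_1(A)^s$ for $0\le s\le1$, $\alpha_1(A)\alpha_2(A)^{s-1}$ for $1<s\le2$, $(\alpha_1(A)\alpha_2(A))^{s/2}$ for $s>2$. $P(\mathsf{A},s)=\lim_n\frac1n\log\sum_{\mathtt{i}\in\Sigma_n}\varphi^s(A_{\mathtt{i}})$, and $\dim_{\mathrm{aff}}(X)$ is the unique $s\ge0$ with $P(\mathsf{A},s)=0$. *)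

theory Defs
  imports "HOL-Analysis.Analysis"
begin

type_synonym mat2 = "real^2^2"

definition ata_eigenvalues :: "mat2 \<Rightarrow> real set" where
  "ata_eigenvalues A = {l. \<exists>x::real^2. x \<noteq> 0 \<and> (transpose A ** A) *v x = l *\<^sub>R x}"

definition sv1 :: "mat2 \<Rightarrow> real" where
  "sv1 A = sqrt (Max (ata_eigenvalues A))"

definition sv2 :: "mat2 \<Rightarrow> real" where
  "sv2 A = sqrt (Min (ata_eigenvalues A))"

definition opnorm :: "mat2 \<Rightarrow> real" where
  "opnorm A = onorm (\<lambda>x::real^2. A *v x)"

definition svf :: "real \<Rightarrow> mat2 \<Rightarrow> real" where
  "svf s A = (if s \<le> 1 then sv1 A powr s
              else if s \<le> 2 then sv1 A * sv2 A powr (s - 1)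
              else (sv1 A * sv2 A) powr (s / 2))"

definition words :: "nat \<Rightarrow> nat \<Rightarrow> nat list set" where
  "words N n = {w. length w = n \<and> set w \<subseteq> {..<N}}"

definition all_words :: "nat \<Rightarrow> nat list set" where
  "all_words N = {w. set w \<subseteq> {..<N}}"

definition matprod :: "(nat \<Rightarrow> mat2) \<Rightarrow> nat list \<Rightarrow> mat2" where
  "matprod A w = foldr (\<lambda>i M. A i ** M) w (mat 1)"

definition affine_ifs :: "nat \<Rightarrow> (nat \<Rightarrow> mat2) \<Rightarrow> (nat \<Rightarrow> real^2) \<Rightarrow> bool" where
  "affine_ifs N A v \<longleftrightarrow> N \<ge> 2 \<and> (\<forall>i<N. invertible (A i) \<and> opnorm (A i) < 1)"

definition is_self_affine_set ::
  "nat \<Rightarrow> (nat \<Rightarrow> mat2) \<Rightarrow> (nat \<Rightarrow> real^2) \<Rightarrow> (real^2) set \<Rightarrow> bool" where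
  "is_self_affine_set N A v X \<longleftrightarrow> affine_ifs N A v \<and> compact X \<and> X \<noteq> {} \<and>
     X = (\<Union>i<N. (\<lambda>x. A i *v x + v i) ` X)"

definition dominated :: "nat \<Rightarrow> (nat \<Rightarrow> mat2) \<Rightarrow> bool" where
  "dominated N A \<longleftrightarrow> (\<exists>C \<tau>. C > 0 \<and> 0 < \<tau> \<and> \<tau> < 1 \<and>
     (\<forall>w\<in>all_words N. sv2 (matprod A w) \<le> C * \<tau> ^ length w * sv1 (matprod A w)))"

definition irreducible_tuple :: "nat \<Rightarrow> (nat \<Rightarrow> mat2) \<Rightarrow> bool" where
  "irreducible_tuple N A \<longleftrightarrow> \<not> (\<exists>L::(real^2) set. subspace L \<and> dim L = 1 \<and>
     (\<forall>i<N. (\<lambda>x. A i *v x) ` L \<subseteq> L))"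

definition pressure :: "nat \<Rightarrow> (nat \<Rightarrow> mat2) \<Rightarrow> real \<Rightarrow> real" where
  "pressure N A s = lim (\<lambda>n. ln (\<Sum>w\<in>words N n. svf s (matprod A w)) / real n)"

definition affinity_dim :: "nat \<Rightarrow> (nat \<Rightarrow> mat2) \<Rightarrow> real" where
  "affinity_dim N A = (THE s. s \<ge> 0 \<and> pressure N A s = 0)"

text \<open>diam(U)^s with the conventions diam(empty)^s = 0 and 0^0 = 1.\<close>
definition diam_pow :: "real \<Rightarrow> 'a::metric_space set \<Rightarrow> real" where
  "diam_pow s U = (if U = {} then 0 else if s = 0 then 1 else diameter U powr s)"

definition hausdorff_content ::
  "real \<Rightarrow> real \<Rightarrow> 'a::metric_space set \<Rightarrow> ennreal" where
  "hausdorff_content s \<delta> E = (INF U \<in> {U :: nat \<Rightarrow> 'a set.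
       E \<subseteq> (\<Union>n. U n) \<and> (\<forall>n. bounded (U n) \<and> diameter (U n) \<le> \<delta>)}.
       (\<Sum>n. ennreal (diam_pow s (U n))))"

definition hausdorff_measure :: "real \<Rightarrow> 'a::metric_space set \<Rightarrow> ennreal" where
  "hausdorff_measure s E = (SUP \<delta> \<in> {0<..}. hausdorff_content s \<delta> E)"

end

theory Submission
  imports Defs
begin

text \<open>
  Both hypotheses make the top singular value quasi-multiplicative: any two products of the
  linear parts can be joined by a connecting word of bounded length at the cost of a constant
  factor. Under irreducibility this follows from compactness of pairs of unit directions; in the
  reducible dominated case all matrices are upper triangular in a common basis, domination forces
  the same diagonal entry to dominate in every generator, and the norm of a product becomes
  comparable to a multiplicative diagonal entry.

  Quasi-multiplicativity makes the sums Z_n(s) of the singular value function over words of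
  length n (svf_sum s n below) supermultiplicative up to a constant, besides submultiplicative,
  so that log Z_n(s) = n P(s) + O(1). At the affinity dimension the pressure vanishes and
  Z_n(s) stays bounded. Finally each cylinder of generation n is an ellipse with axes sv1 and sv2 of the
  corresponding product; cutting it into about sv1/sv2 pieces of diameter comparable to sv2
  (or keeping it whole when s \<le> 1) costs at most a constant times the singular value
  function, so the s-dimensional Hausdorff content is bounded by a constant times Z_n(s).
\<close>

section \<open>Singular values of real 2x2 matrices\<close>

lemma matrix_vector_mult_2:
  fixes A :: "real^2^2"
  shows "(A *v x) $ 1 = A$1$1 * x$1 + A$1$2 * x$2"
    and "(A *v x) $ 2 = A$2$1 * x$1 + A$2$2 * x$2"
  by (simp_all add: matrix_vector_mult_def sum_2)

lemma matrix_matrix_mult_2: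
  fixes A B :: "real^2^2"
  shows "(A ** B) $ 1 $ 1 = A$1$1 * B$1$1 + A$1$2 * B$2$1"
    and "(A ** B) $ 1 $ 2 = A$1$1 * B$1$2 + A$1$2 * B$2$2"
    and "(A ** B) $ 2 $ 1 = A$2$1 * B$1$1 + A$2$2 * B$2$1"
    and "(A ** B) $ 2 $ 2 = A$2$1 * B$1$2 + A$2$2 * B$2$2"
  by (simp_all add: matrix_matrix_mult_def sum_2)

lemma norm_real2_sq: "(norm x)^2 = (x$1)^2 + (x$2)^2" for x :: "real^2"
  by (simp add: norm_vec_def L2_set_def sum_2)

lemma real2_eq_iff: "x = y \<longleftrightarrow> x$1 = y$1 \<and> x$2 = y$2" for x y :: "real^2"
  by (simp add: vec_eq_iff forall_2)

lemma inner_real2: "x \<bullet> y = x$1 * y$1 + x$2 * y$2" for x y :: "real^2"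
  by (simp add: inner_vec_def sum_2)

definition gram11 :: "mat2 \<Rightarrow> real" where "gram11 A = (A$1$1)^2 + (A$2$1)^2"
definition gram12 :: "mat2 \<Rightarrow> real" where "gram12 A = A$1$1 * A$1$2 + A$2$1 * A$2$2"
definition gram22 :: "mat2 \<Rightarrow> real" where "gram22 A = (A$1$2)^2 + (A$2$2)^2"
definition gram_disc :: "mat2 \<Rightarrow> real" where
  "gram_disc A = sqrt ((gram11 A - gram22 A)^2 + 4 * (gram12 A)^2)"
definition gram_eig_max :: "mat2 \<Rightarrow> real" where
  "gram_eig_max A = (gram11 A + gram22 A + gram_disc A) / 2"
definition gram_eig_min :: "mat2 \<Rightarrow> real" where
  "gram_eig_min A = (gram11 A + gram22 A - gram_disc A) / 2"

lemma gram_mult_vec: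
  fixes A :: mat2
  shows "((transpose A ** A) *v x) $ 1 = gram11 A * x$1 + gram12 A * x$2"
    and "((transpose A ** A) *v x) $ 2 = gram12 A * x$1 + gram22 A * x$2"
  by (simp_all add: matrix_vector_mult_2 matrix_matrix_mult_2 transpose_def gram11_def gram12_def
      gram22_def algebra_simps power2_eq_square)

lemma gram_det: "gram11 A * gram22 A - (gram12 A)^2 = (det A)^2"
  by (simp add: det_2 gram11_def gram12_def gram22_def algebra_simps power2_eq_square)

lemma gram_diag_nonneg: "gram11 A \<ge> 0" "gram22 A \<ge> 0"
  by (simp_all add: gram11_def gram22_def)

lemma gram_disc_sq: "(gram_disc A)^2 = (gram11 A - gram22 A)^2 + 4 * (gram12 A)^2"
  by (simp add: gram_disc_def)

lemma ata_eigenvalues_iff: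
  "l \<in> ata_eigenvalues A \<longleftrightarrow> (gram11 A - l) * (gram22 A - l) = (gram12 A)^2"
proof
  assume "l \<in> ata_eigenvalues A"
  then obtain x :: "real^2" where x0: "x \<noteq> 0" and e: "(transpose A ** A) *v x = l *\<^sub>R x"
    by (auto simp: ata_eigenvalues_def)
  have e1: "(gram11 A - l) * x$1 + gram12 A * x$2 = 0"
    and e2: "gram12 A * x$1 + (gram22 A - l) * x$2 = 0"
    using arg_cong[OF e, of "\<lambda>v. v$1"] arg_cong[OF e, of "\<lambda>v. v$2"]
    by (simp_all add: gram_mult_vec algebra_simps)
  have "((gram11 A - l) * (gram22 A - l) - (gram12 A)^2) * x$1 = 0"
    "((gram11 A - l) * (gram22 A - l) - (gram12 A)^2) * x$2 = 0"
    using arg_cong[OF e1, of "\<lambda>t. (gram22 A - l) * t"] arg_cong[OF e2, of "\<lambda>t. gram12 A * t"]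
      arg_cong[OF e2, of "\<lambda>t. (gram11 A - l) * t"] arg_cong[OF e1, of "\<lambda>t. gram12 A * t"]
    by (simp_all add: algebra_simps power2_eq_square)
  moreover have "x$1 \<noteq> 0 \<or> x$2 \<noteq> 0"
    using x0 by (auto simp: real2_eq_iff)
  ultimately show "(gram11 A - l) * (gram22 A - l) = (gram12 A)^2"
    by auto
next
  assume h: "(gram11 A - l) * (gram22 A - l) = (gram12 A)^2"
  obtain x :: "real^2" where x0: "x \<noteq> 0"
    and e1: "(gram11 A - l) * x$1 + gram12 A * x$2 = 0"
    and e2: "gram12 A * x$1 + (gram22 A - l) * x$2 = 0"
  proof (cases "gram12 A = 0")
    case False
    then show ?thesis
      using h that[of "vector [gram12 A, l - gram11 A]"]
      by (auto simp: real2_eq_iff algebra_simps power2_eq_square)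
  next
    case True
    then have "gram11 A = l \<or> gram22 A = l"
      using h by simp
    then show ?thesis
      using that[of "vector [1, 0]"] that[of "vector [0, 1]"] True by (auto simp: real2_eq_iff)
  qed
  have "(transpose A ** A) *v x = l *\<^sub>R x"
    using e1 e2 by (simp add: real2_eq_iff gram_mult_vec algebra_simps)
  then show "l \<in> ata_eigenvalues A"
    using x0 by (auto simp: ata_eigenvalues_def)
qed

lemma ata_eigenvalues_eq: "ata_eigenvalues A = {gram_eig_max A, gram_eig_min A}"
proof -
  have "(gram11 A - l) * (gram22 A - l) = (gram12 A)^2
        \<longleftrightarrow> (2*l - gram11 A - gram22 A)^2 = (gram_disc A)^2" for l
    unfolding gram_disc_sq by (auto simp: power2_eq_square algebra_simps)
  also have "\<dots> l \<longleftrightarrow> 2*l - gram11 A - gram22 A = gram_disc A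
                    \<or> 2*l - gram11 A - gram22 A = - gram_disc A" for l
    by (metis power2_eq_iff)
  finally show ?thesis
    unfolding set_eq_iff ata_eigenvalues_iff gram_eig_max_def gram_eig_min_def
    by (auto simp: field_simps)
qed

lemma gram_eig_min_nonneg: "gram_eig_min A \<ge> 0"
proof -
  have "(gram11 A + gram22 A)^2 - (gram_disc A)^2 = 4 * (det A)^2"
    unfolding gram_disc_sq gram_det[symmetric] by (simp add: power2_eq_square algebra_simps)
  then have "(gram_disc A)^2 \<le> (gram11 A + gram22 A)^2"
    by (smt (verit) zero_le_power2)
  then have "gram_disc A \<le> gram11 A + gram22 A"
    using gram_diag_nonneg[of A] by (meson add_nonneg_nonneg power2_le_imp_le)
  then show ?thesis
    by (simp add: gram_eig_min_def)
qed

lemma gram_eig_min_le_max: "gram_eig_min A \<le> gram_eig_max A"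
  by (simp add: gram_eig_min_def gram_eig_max_def gram_disc_def)

lemma gram_eig_max_nonneg: "gram_eig_max A \<ge> 0"
  using gram_eig_min_nonneg[of A] gram_eig_min_le_max[of A] by linarith

lemma gram_eig_max_ge: "gram11 A \<le> gram_eig_max A" "gram22 A \<le> gram_eig_max A"
proof -
  have "\<bar>gram11 A - gram22 A\<bar> \<le> gram_disc A"
    unfolding gram_disc_def by (metis real_sqrt_abs real_sqrt_le_mono le_add_same_cancel1
        mult_nonneg_nonneg zero_le_numeral zero_le_power2)
  then show "gram11 A \<le> gram_eig_max A" "gram22 A \<le> gram_eig_max A"
    by (auto simp: gram_eig_max_def)
qed

lemma gram_eig_max_mult_min: "gram_eig_max A * gram_eig_min A = (det A)^2"
proof -
  have "gram_eig_max A * gram_eig_min A = ((gram11 A + gram22 A)^2 - (gram_disc A)^2) / 4"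
    by (simp add: gram_eig_max_def gram_eig_min_def algebra_simps power2_eq_square)
  then show ?thesis
    unfolding gram_disc_sq gram_det[symmetric] by (simp add: field_simps power2_eq_square)
qed

lemma sv1_eq_sqrt: "sv1 A = sqrt (gram_eig_max A)"
  by (simp add: sv1_def ata_eigenvalues_eq gram_eig_min_le_max max_absorb1)

lemma sv2_eq_sqrt: "sv2 A = sqrt (gram_eig_min A)"
  by (simp add: sv2_def ata_eigenvalues_eq gram_eig_min_le_max min_absorb2)

lemma sv1_mult_sv2: "sv1 A * sv2 A = \<bar>det A\<bar>"
  by (simp add: sv1_eq_sqrt sv2_eq_sqrt real_sqrt_mult[symmetric] gram_eig_max_mult_min
      del: real_sqrt_mult)

lemma sv1_nonneg: "sv1 A \<ge> 0" and sv2_nonneg: "sv2 A \<ge> 0"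
  by (simp_all add: sv1_eq_sqrt sv2_eq_sqrt gram_eig_max_nonneg gram_eig_min_nonneg)

lemma sv2_le_sv1: "sv2 A \<le> sv1 A"
  by (simp add: sv1_eq_sqrt sv2_eq_sqrt gram_eig_min_le_max)

lemma sv1_sq: "(sv1 A)^2 = gram_eig_max A"
  by (simp add: sv1_eq_sqrt gram_eig_max_nonneg)

lemma norm_mult_vec_sq:
  "(norm (A *v x))^2 = gram11 A * (x$1)^2 + 2 * gram12 A * x$1 * x$2 + gram22 A * (x$2)^2"
  unfolding norm_real2_sq matrix_vector_mult_2 gram11_def gram12_def gram22_def
  by (simp add: algebra_simps power2_eq_square)

lemma norm_mult_vec_le_sv1: "norm (A *v x) \<le> sv1 A * norm x"
proof -
  define a where "a = gram_eig_max A - gram11 A"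
  define g where "g = gram_eig_max A - gram22 A"
  define q where "q = gram12 A"
  have a0: "a \<ge> 0" and g0: "g \<ge> 0"
    using gram_eig_max_ge[of A] by (auto simp: a_def g_def)
  have ag: "a * g = q^2"
    using ata_eigenvalues_iff[of "gram_eig_max A" A] ata_eigenvalues_eq[of A]
    by (simp add: a_def g_def q_def algebra_simps)
  have psd: "a * (x$1)^2 - 2 * q * x$1 * x$2 + g * (x$2)^2 \<ge> 0"
  proof (cases "a = 0")
    case True
    then show ?thesis
      using ag g0 by simp
  next
    case False
    have "a * (a * (x$1)^2 - 2 * q * x$1 * x$2 + g * (x$2)^2) = (a * x$1 - q * x$2)^2"
      using ag by (simp add: algebra_simps power2_eq_square)
    then have "a * (a * (x$1)^2 - 2 * q * x$1 * x$2 + g * (x$2)^2) \<ge> 0"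
      by simp
    then show ?thesis
      using False a0 by (simp add: zero_le_mult_iff)
  qed
  have "gram_eig_max A * (norm x)^2 - (norm (A *v x))^2
        = a * (x$1)^2 - 2 * q * x$1 * x$2 + g * (x$2)^2"
    unfolding norm_mult_vec_sq norm_real2_sq[of x] by (simp add: a_def g_def q_def algebra_simps power2_eq_square)
  then have "(norm (A *v x))^2 \<le> gram_eig_max A * (norm x)^2"
    using psd by linarith
  also have "\<dots> = (sv1 A * norm x)^2"
    by (simp add: sv1_sq power_mult_distrib)
  finally show ?thesis
    by (meson mult_nonneg_nonneg norm_ge_zero power2_le_imp_le sv1_nonneg)
qed

lemma sv1_attained: "\<exists>x::real^2. norm x = 1 \<and> norm (A *v x) = sv1 A"
proof -
  obtain x :: "real^2" where x0: "x \<noteq> 0"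
    and e: "(transpose A ** A) *v x = gram_eig_max A *\<^sub>R x"
    using ata_eigenvalues_eq[of A] by (auto simp: ata_eigenvalues_def)
  have e1: "gram11 A * x$1 + gram12 A * x$2 = gram_eig_max A * x$1"
    and e2: "gram12 A * x$1 + gram22 A * x$2 = gram_eig_max A * x$2"
    using arg_cong[OF e, of "\<lambda>v. v$1"] arg_cong[OF e, of "\<lambda>v. v$2"] by (simp_all add: gram_mult_vec)
  have "(norm (A *v x))^2
        = x$1 * (gram11 A * x$1 + gram12 A * x$2) + x$2 * (gram12 A * x$1 + gram22 A * x$2)"
    unfolding norm_mult_vec_sq by (simp add: algebra_simps power2_eq_square)
  also have "\<dots> = (sv1 A * norm x)^2"
    unfolding e1 e2 norm_real2_sq power_mult_distrib sv1_sq by (simp add: algebra_simps power2_eq_square)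
  finally have "norm (A *v x) = sv1 A * norm x"
    by (metis norm_ge_zero mult_nonneg_nonneg sv1_nonneg power2_eq_iff_nonneg)
  then show ?thesis
    using x0 by (intro exI[of _ "x /\<^sub>R norm x"]) (simp add: matrix_vector_mult_scaleR)
qed

lemma sv1_mult_le: "sv1 (P ** Q) \<le> sv1 P * sv1 Q"
proof -
  obtain x :: "real^2" where x: "norm x = 1" "norm ((P ** Q) *v x) = sv1 (P ** Q)"
    using sv1_attained by blast
  have "norm ((P ** Q) *v x) = norm (P *v (Q *v x))"
    by (simp add: matrix_vector_mul_assoc)
  also have "\<dots> \<le> sv1 P * norm (Q *v x)"
    by (rule norm_mult_vec_le_sv1)
  also have "\<dots> \<le> sv1 P * sv1 Q"
    using norm_mult_vec_le_sv1[of Q x] x(1) by (simp add: mult_left_mono sv1_nonneg)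
  finally show ?thesis
    using x by simp
qed

lemma sv1_le_opnorm: "sv1 P \<le> opnorm P"
proof -
  obtain x :: "real^2" where x: "norm x = 1" "norm (P *v x) = sv1 P"
    using sv1_attained by blast
  show ?thesis
    using onorm[OF matrix_vector_mul_bounded_linear, of P x] x by (simp add: opnorm_def)
qed

lemma sv1_mat1: "sv1 (mat 1) = 1"
  using sv1_attained[of "mat 1"] by auto

lemma sv_pos:
  assumes "det P \<noteq> 0"
  shows "sv1 P > 0" "sv2 P > 0"
  using sv1_mult_sv2[of P] sv1_nonneg[of P] sv2_nonneg[of P] assms
  by (metis abs_eq_0 less_eq_real_def mult_eq_0_iff)+

lemma sv2_eq_det_div_sv1: "det P \<noteq> 0 \<Longrightarrow> sv2 P = \<bar>det P\<bar> / sv1 P"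
  using sv1_mult_sv2[of P] sv_pos[of P] by (simp add: field_simps)

lemma inner_mult_vec_le_sv1:
  assumes "norm z = 1" "norm x = 1"
  shows "\<bar>z \<bullet> (M *v x)\<bar> \<le> sv1 M"
  using Cauchy_Schwarz_ineq2[of z "M *v x"] norm_mult_vec_le_sv1[of M x] assms by simp

lemma matprod_Nil [simp]: "matprod A [] = mat 1"
  by (simp add: matprod_def)

lemma matprod_Cons [simp]: "matprod A (i # w) = A i ** matprod A w"
  by (simp add: matprod_def)

lemma matprod_append: "matprod A (w @ v) = matprod A w ** matprod A v"
  by (induction w) (simp_all add: matrix_mul_assoc)

lemma words_eq: "words N n = {xs. set xs \<subseteq> {..<N} \<and> length xs = n}"
  by (auto simp: words_def)

lemma finite_words [simp]: "finite (words N n)"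
  unfolding words_eq by (rule finite_lists_length_eq) simp

lemma card_words: "card (words N n) = N ^ n"
  unfolding words_eq by (simp add: card_lists_length_eq)

lemma words_0: "words N 0 = {[]}"
  by (auto simp: words_def)

lemma words_subset_all_words: "words N n \<subseteq> all_words N"
  by (auto simp: words_def all_words_def)

lemma all_words_Cons_iff [simp]: "i # w \<in> all_words N \<longleftrightarrow> i < N \<and> w \<in> all_words N"
  by (simp add: all_words_def)

lemma all_words_append_iff [simp]: "w @ v \<in> all_words N \<longleftrightarrow> w \<in> all_words N \<and> v \<in> all_words N"
  by (auto simp: all_words_def)

lemma replicate_in_all_words: "i < N \<Longrightarrow> replicate n i \<in> all_words N"
  by (auto simp: all_words_def)

lemma bij_betw_append_words:
  "bij_betw (\<lambda>(x, y). x @ y) (words N n \<times> words N m) (words N (n + m))"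
proof (rule bij_betwI')
  fix p q assume "p \<in> words N n \<times> words N m" "q \<in> words N n \<times> words N m"
  then show "((\<lambda>(x, y). x @ y) p = (\<lambda>(x, y). x @ y) q) = (p = q)"
    by (cases p; cases q) (auto simp: words_def)
next
  fix p assume "p \<in> words N n \<times> words N m"
  then show "(\<lambda>(x, y). x @ y) p \<in> words N (n + m)"
    by (cases p) (auto simp: words_def)
next
  fix w assume "w \<in> words N (n + m)"
  then show "\<exists>p\<in>words N n \<times> words N m. w = (\<lambda>(x, y). x @ y) p"
    by (intro bexI[of _ "(take n w, drop n w)"]) (auto simp: words_def dest: in_set_takeD in_set_dropD)
qed

lemma sum_words_add:
  "(\<Sum>w\<in>words N (n + m). f w) = (\<Sum>x\<in>words N n. \<Sum>y\<in>words N m. f (x @ y))"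
proof -
  have "(\<Sum>w\<in>words N (n + m). f w) = (\<Sum>p\<in>words N n \<times> words N m. f ((\<lambda>(x, y). x @ y) p))"
    using sum.reindex_bij_betw[OF bij_betw_append_words, of f] by simp
  then show ?thesis
    by (simp add: sum.cartesian_product split_def)
qed

lemma pow_powr_swap: "0 < x \<Longrightarrow> (x ^ n) powr t = (x powr t) ^ n" for x t :: real
  by (simp add: powr_realpow[symmetric] powr_powr powr_power mult.commute)

definition sv1_exponent :: "real \<Rightarrow> real" where
  "sv1_exponent s = (if s \<le> 1 then s else if s \<le> 2 then 1 else s / 2)"

lemma sv1_exponent_bounds:
  assumes "s \<ge> 0"
  shows "0 \<le> 2 * sv1_exponent s - s" "sv1_exponent s \<le> s"
  using assms by (auto simp: sv1_exponent_def)

lemma sv1_exponent_shift: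
  assumes "s \<ge> 0" "t \<ge> 0"
  shows "sv1_exponent s \<le> sv1_exponent (s + t)" "sv1_exponent (s + t) \<le> sv1_exponent s + t"
  using assms by (auto simp: sv1_exponent_def)

lemma svf_eq_powr_sv:
  assumes "det P \<noteq> 0"
  shows "svf s P = sv1 P powr sv1_exponent s * sv2 P powr (s - sv1_exponent s)"
  using sv_pos[OF assms] by (auto simp: svf_def sv1_exponent_def powr_mult)

lemma svf_eq_powr_det:
  assumes "det P \<noteq> 0"
  shows "svf s P = sv1 P powr (2 * sv1_exponent s - s) * \<bar>det P\<bar> powr (s - sv1_exponent s)"
proof -
  let ?e = "sv1_exponent s"
  have "sv1 P powr (2 * ?e - s) * \<bar>det P\<bar> powr (s - ?e)
        = (sv1 P powr (2 * ?e - s) * sv1 P powr (s - ?e)) * sv2 P powr (s - ?e)"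
    using sv_pos[OF assms] by (simp add: sv1_mult_sv2[symmetric] powr_mult)
  also have "\<dots> = svf s P"
    using sv_pos[OF assms] by (simp add: svf_eq_powr_sv[OF assms] powr_add[symmetric])
  finally show ?thesis ..
qed

lemma svf_pos: "det P \<noteq> 0 \<Longrightarrow> svf s P > 0"
  using sv_pos[of P] by (simp add: svf_def)

lemma svf_0: "det P \<noteq> 0 \<Longrightarrow> svf 0 P = 1"
  using sv_pos[of P] by (simp add: svf_def)

lemma svf_mat1: "svf s (mat 1) = 1"
  using sv2_eq_det_div_sv1[of "mat 1"] by (simp add: svf_def sv1_mat1)

lemma svf_mult_le:
  assumes "det P \<noteq> 0" "det Q \<noteq> 0" "s \<ge> 0"
  shows "svf s (P ** Q) \<le> svf s P * svf s Q"
proof -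
  define a where "a = 2 * sv1_exponent s - s"
  define b where "b = s - sv1_exponent s"
  have a0: "a \<ge> 0"
    using sv1_exponent_bounds[OF assms(3)] by (simp add: a_def)
  have "sv1 (P ** Q) powr a \<le> (sv1 P * sv1 Q) powr a"
    by (rule powr_mono2[OF a0 sv1_nonneg sv1_mult_le])
  then have "sv1 (P ** Q) powr a \<le> sv1 P powr a * sv1 Q powr a"
    by (simp add: powr_mult sv1_nonneg)
  then have "sv1 (P ** Q) powr a * \<bar>det (P ** Q)\<bar> powr b
      \<le> (sv1 P powr a * sv1 Q powr a) * (\<bar>det P\<bar> powr b * \<bar>det Q\<bar> powr b)"
    by (simp add: det_mul abs_mult powr_mult mult_right_mono)
  then show ?thesis
    using assms by (simp add: svf_eq_powr_det det_mul a_def b_def algebra_simps)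
qed

lemma svf_add_bounds:
  assumes "det P \<noteq> 0" "s \<ge> 0" "t \<ge> 0"
  shows "svf s P * sv2 P powr t \<le> svf (s + t) P" "svf (s + t) P \<le> svf s P * sv1 P powr t"
proof -
  have p1: "sv1 P > 0" and p2: "sv2 P > 0"
    using sv_pos[OF assms(1)] by auto
  define d where "d = sv1_exponent (s + t) - sv1_exponent s"
  have d: "0 \<le> d" "d \<le> t"
    using sv1_exponent_shift[OF assms(2,3)] by (auto simp: d_def)
  have eq: "svf (s + t) P = svf s P * (sv1 P powr d * sv2 P powr (t - d))"
    using p1 p2 unfolding svf_eq_powr_sv[OF assms(1)] d_def
    by (simp add: powr_add[symmetric] algebra_simps)
  have "sv2 P powr t = sv2 P powr d * sv2 P powr (t - d)"
    using p2 by (simp add: powr_add[symmetric])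
  also have "\<dots> \<le> sv1 P powr d * sv2 P powr (t - d)"
    using d p2 by (intro mult_right_mono powr_mono2 sv2_le_sv1) auto
  finally have lower: "sv2 P powr t \<le> sv1 P powr d * sv2 P powr (t - d)" .
  have "sv1 P powr d * sv2 P powr (t - d) \<le> sv1 P powr d * sv1 P powr (t - d)"
    using d p2 by (intro mult_left_mono powr_mono2 sv2_le_sv1) auto
  also have "\<dots> = sv1 P powr t"
    using p1 by (simp add: powr_add[symmetric])
  finally have upper: "sv1 P powr d * sv2 P powr (t - d) \<le> sv1 P powr t" .
  show "svf s P * sv2 P powr t \<le> svf (s + t) P" "svf (s + t) P \<le> svf s P * sv1 P powr t"
    unfolding eq using lower upper svf_pos[OF assms(1), of s] by simp_all
qed

lemma sv1_mult_sv2_powr_le_svf: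
  assumes "det M \<noteq> 0" "s > 1"
  shows "sv1 M * sv2 M powr (s - 1) \<le> svf s M"
proof (cases "s \<le> 2")
  case True
  then show ?thesis
    using assms by (simp add: svf_def)
next
  case False
  have p1: "sv1 M > 0" and p2: "sv2 M > 0"
    using sv_pos[OF assms(1)] by auto
  define e where "e = s/2 - 1"
  have e0: "e \<ge> 0"
    using False by (simp add: e_def)
  have "sv1 M * sv2 M powr (s - 1)
        = (sv1 M powr (s/2) / sv1 M powr e) * (sv2 M powr (s/2) * sv2 M powr e)"
    using p1 p2 by (simp add: e_def powr_diff[symmetric] powr_add[symmetric])
  also have "\<dots> \<le> (sv1 M powr (s/2) / sv1 M powr e) * (sv2 M powr (s/2) * sv1 M powr e)"
    using p1 p2 e0 sv2_le_sv1[of M] by (intro mult_left_mono powr_mono2) auto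
  also have "\<dots> = svf s M"
    using False assms(2) p1 p2 by (simp add: svf_def powr_mult)
  finally show ?thesis .
qed

section \<open>Almost additive sequences\<close>

lemma le_of_le_add_over_n:
  fixes x y d :: real
  assumes "\<And>n::nat. n \<ge> 1 \<Longrightarrow> x \<le> y + d / real n"
  shows "x \<le> y"
proof (rule LIMSEQ_le_const)
  show "(\<lambda>n. y + d / real n) \<longlonglongrightarrow> y"
    using tendsto_add[OF tendsto_const lim_const_over_n, of y d] by simp
qed (use assms in auto)

lemma almost_additive_mult_bounds:
  fixes a :: "nat \<Rightarrow> real"
  assumes "a 0 = 0" and "\<And>n m. a (n + m) \<le> a n + a m" and "\<And>n m. a n + a m - d \<le> a (n + m)"
  shows "a (m * n) \<le> real m * a n" "real m * a n - real m * d \<le> a (m * n)"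
proof -
  show "a (m * n) \<le> real m * a n"
  proof (induction m)
    case (Suc m)
    then show ?case
      using assms(2)[of n "m * n"] by (simp add: algebra_simps)
  qed (simp add: assms(1))
  show "real m * a n - real m * d \<le> a (m * n)"
  proof (induction m)
    case (Suc m)
    then show ?case
      using assms(3)[of n "m * n"] by (simp add: algebra_simps)
  qed (simp add: assms(1))
qed

lemma almost_additive_averages_close:
  fixes a :: "nat \<Rightarrow> real"
  assumes "a 0 = 0" and "\<And>n m. a (n + m) \<le> a n + a m" and "\<And>n m. a n + a m - d \<le> a (n + m)"
    and "n \<ge> 1" "m \<ge> 1"
  shows "a n / real n \<le> a m / real m + d / real n"
proof -
  have "real m * a n - real m * d \<le> real n * a m"
    using almost_additive_mult_bounds(2)[OF assms(1-3), of m n]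
      almost_additive_mult_bounds(1)[OF assms(1-3), of n m] by (simp add: mult.commute)
  then have "(real m * a n - real m * d) / (real m * real n) \<le> real n * a m / (real m * real n)"
    by (rule divide_right_mono) simp
  moreover have "(real m * a n - real m * d) / (real m * real n) = a n / real n - d / real n"
    "real n * a m / (real m * real n) = a m / real m"
    using assms(4,5) by (simp_all add: field_simps)
  ultimately show ?thesis
    by simp
qed

text \<open>Fekete's lemma, with the rate of convergence that almost additivity provides.\<close>

lemma almost_additive_limit:
  fixes a :: "nat \<Rightarrow> real"
  assumes a0: "a 0 = 0" and sub: "\<And>n m. a (n + m) \<le> a n + a m"
    and super: "\<And>n m. a n + a m - d \<le> a (n + m)"
  shows "\<exists>L. (\<lambda>n. a n / real n) \<longlonglongrightarrow> L \<and> (\<forall>n\<ge>1. L \<le> a n / real n \<and> a n / real n \<le> L + d / real n)"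
proof -
  define b where "b n = a n / real n" for n
  have close: "b n \<le> b m + d / real n" if "n \<ge> 1" "m \<ge> 1" for n m
    unfolding b_def using almost_additive_averages_close[OF a0 sub super that] .
  have d0: "d \<ge> 0"
    using super[of 0 0] a0 by simp
  have "Cauchy b"
  proof (rule CauchyI)
    fix e :: real assume e: "0 < e"
    obtain M :: nat where M: "real M > d / e"
      using reals_Archimedean2 by blast
    have small: "d / real k < e" if "k \<ge> Suc M" for k
    proof -
      have "d < e * real k"
        using M that e by (simp add: field_simps) (smt (verit) of_nat_Suc of_nat_mono mult_left_mono)
      then show ?thesis
        using that by (simp add: field_simps)
    qed
    have "norm (b m - b n) < e" if "m \<ge> Suc M" "n \<ge> Suc M" for m n
      using close[of m n] close[of n m] small[OF that(1)] small[OF that(2)] that by auto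
    then show "\<exists>M. \<forall>m\<ge>M. \<forall>n\<ge>M. norm (b m - b n) < e"
      by blast
  qed
  then obtain L where L: "b \<longlonglongrightarrow> L"
    using Cauchy_convergent_iff convergent_def by blast
  have "L \<le> b n \<and> b n \<le> L + d / real n" if n: "n \<ge> 1" for n
  proof
    have "(\<lambda>m. b n + d / real m) \<longlonglongrightarrow> b n"
      using tendsto_add[OF tendsto_const lim_const_over_n, of "b n" d] by simp
    then show "L \<le> b n"
      using n close by (intro LIMSEQ_le[OF L]) auto
    have "b n - d / real n \<le> L"
      using n close by (intro LIMSEQ_le_const[OF L] exI[of _ 1]) (auto simp: algebra_simps)
    then show "b n \<le> L + d / real n"
      by simp
  qed
  then show ?thesis
    using L unfolding b_def by blast
qed

locale contracting_tuple =
  fixes N :: nat and A :: "nat \<Rightarrow> mat2"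
  assumes two_le_N: "N \<ge> 2"
    and det_nonzero: "\<And>i. i < N \<Longrightarrow> det (A i) \<noteq> 0"
    and sv1_less_1: "\<And>i. i < N \<Longrightarrow> sv1 (A i) < 1"
begin

abbreviation Aw :: "nat list \<Rightarrow> mat2" where "Aw w \<equiv> matprod A w"

definition max_sv1 :: real where "max_sv1 = Max ((\<lambda>i. sv1 (A i)) ` {..<N})"
definition min_det :: real where "min_det = Min ((\<lambda>i. \<bar>det (A i)\<bar>) ` {..<N})"

lemma alphabet_nonempty: "{..<N} \<noteq> {}"
  using two_le_N by (auto simp: lessThan_empty_iff)

lemma max_sv1_props: "0 < max_sv1" "max_sv1 < 1" "\<And>i. i < N \<Longrightarrow> sv1 (A i) \<le> max_sv1"
proof -
  show le: "\<And>i. i < N \<Longrightarrow> sv1 (A i) \<le> max_sv1"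
    unfolding max_sv1_def by (intro Max_ge) auto
  show "0 < max_sv1"
    using le[of 0] sv_pos(1)[OF det_nonzero[of 0]] two_le_N by linarith
  have "max_sv1 \<in> (\<lambda>i. sv1 (A i)) ` {..<N}"
    unfolding max_sv1_def using alphabet_nonempty by (intro Max_in) auto
  then show "max_sv1 < 1"
    using sv1_less_1 by auto
qed

lemma min_det_props: "0 < min_det" "\<And>i. i < N \<Longrightarrow> min_det \<le> \<bar>det (A i)\<bar>"
proof -
  have "min_det \<in> (\<lambda>i. \<bar>det (A i)\<bar>) ` {..<N}"
    unfolding min_det_def using alphabet_nonempty by (intro Min_in) auto
  then show "0 < min_det"
    using det_nonzero by auto
  show "\<And>i. i < N \<Longrightarrow> min_det \<le> \<bar>det (A i)\<bar>"
    unfolding min_det_def by (intro Min_le) auto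
qed

lemma min_det_le_1: "min_det \<le> 1"
proof -
  have "min_det \<le> sv1 (A 0) * sv2 (A 0)"
    using min_det_props(2)[of 0] two_le_N by (simp add: sv1_mult_sv2)
  also have "\<dots> \<le> 1 * 1"
    using sv1_less_1[of 0] two_le_N sv2_le_sv1[of "A 0"] sv2_nonneg[of "A 0"]
    by (intro mult_mono) auto
  finally show ?thesis
    by simp
qed

lemma det_Aw:
  assumes "w \<in> all_words N"
  shows "det (Aw w) \<noteq> 0" "min_det ^ length w \<le> \<bar>det (Aw w)\<bar>"
proof -
  have "det (Aw w) \<noteq> 0 \<and> min_det ^ length w \<le> \<bar>det (Aw w)\<bar>"
    using assms
  proof (induction w)
    case (Cons i w)
    then show ?case
      using det_nonzero[of i] min_det_props
      by (auto simp: det_mul abs_mult intro!: mult_mono)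
  qed simp
  then show "det (Aw w) \<noteq> 0" "min_det ^ length w \<le> \<bar>det (Aw w)\<bar>"
    by auto
qed

lemma sv1_Aw_le: "w \<in> all_words N \<Longrightarrow> sv1 (Aw w) \<le> max_sv1 ^ length w"
proof (induction w)
  case (Cons i w)
  have "sv1 (Aw (i # w)) \<le> sv1 (A i) * sv1 (Aw w)"
    by (simp add: sv1_mult_le)
  also have "\<dots> \<le> max_sv1 * max_sv1 ^ length w"
    using Cons max_sv1_props by (intro mult_mono) (auto simp: sv1_nonneg)
  finally show ?case
    by simp
qed (simp add: sv1_mat1)

lemma sv2_Aw_ge:
  assumes "w \<in> all_words N"
  shows "min_det ^ length w \<le> sv2 (Aw w)"
proof -
  have "sv1 (Aw w) \<le> 1"
    using sv1_Aw_le[OF assms] max_sv1_props(1,2) by (meson less_imp_le order_trans power_le_one)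
  then have "\<bar>det (Aw w)\<bar> \<le> \<bar>det (Aw w)\<bar> / sv1 (Aw w)"
    using sv_pos(1)[OF det_Aw(1)[OF assms]] by (simp add: le_divide_eq mult_left_le)
  then show ?thesis
    using det_Aw[OF assms] sv2_eq_det_div_sv1 by simp
qed

definition svf_sum :: "real \<Rightarrow> nat \<Rightarrow> real" where
  "svf_sum s n = (\<Sum>w\<in>words N n. svf s (Aw w))"

lemma svf_Aw_pos: "w \<in> all_words N \<Longrightarrow> svf s (Aw w) > 0"
  using svf_pos det_Aw(1) by blast

lemma svf_sum_pos: "svf_sum s n > 0"
proof -
  have "replicate n 0 \<in> words N n"
    using two_le_N by (auto simp: words_def)
  then show ?thesis
    unfolding svf_sum_def using words_subset_all_words
    by (intro sum_pos) (auto intro: svf_Aw_pos)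
qed

lemma svf_sum_0: "svf_sum s 0 = 1"
  by (simp add: svf_sum_def words_0 svf_mat1)

lemma svf_sum_at_0: "svf_sum 0 n = real N ^ n"
proof -
  have "svf_sum 0 n = (\<Sum>w\<in>words N n. 1)"
    unfolding svf_sum_def using words_subset_all_words
    by (intro sum.cong refl svf_0 det_Aw(1)) auto
  then show ?thesis
    by (simp add: card_words)
qed

lemma svf_sum_submult:
  assumes "s \<ge> 0"
  shows "svf_sum s (n + m) \<le> svf_sum s n * svf_sum s m"
proof -
  have "svf_sum s (n + m) = (\<Sum>x\<in>words N n. \<Sum>y\<in>words N m. svf s (Aw x ** Aw y))"
    unfolding svf_sum_def sum_words_add matprod_append ..
  also have "\<dots> \<le> (\<Sum>x\<in>words N n. \<Sum>y\<in>words N m. svf s (Aw x) * svf s (Aw y))"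
    using words_subset_all_words
    by (intro sum_mono svf_mult_le assms det_Aw(1)) auto
  also have "\<dots> = svf_sum s n * svf_sum s m"
    by (simp add: svf_sum_def sum_product)
  finally show ?thesis .
qed

lemma svf_sum_add_bounds:
  assumes "s \<ge> 0" "t \<ge> 0"
  shows "svf_sum (s + t) n \<le> svf_sum s n * (max_sv1 powr t) ^ n"
    and "svf_sum s n * (min_det powr t) ^ n \<le> svf_sum (s + t) n"
proof -
  have "svf (s + t) (Aw w) \<le> svf s (Aw w) * (max_sv1 powr t) ^ n"
    and "svf s (Aw w) * (min_det powr t) ^ n \<le> svf (s + t) (Aw w)"
    if w: "w \<in> words N n" for w
  proof -
    have aw: "w \<in> all_words N" and lw: "length w = n"
      using w words_subset_all_words by (auto simp: words_def)
    note d = det_Aw(1)[OF aw]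
    have "svf (s + t) (Aw w) \<le> svf s (Aw w) * sv1 (Aw w) powr t"
      by (rule svf_add_bounds(2)[OF d assms])
    also have "\<dots> \<le> svf s (Aw w) * (max_sv1 ^ n) powr t"
      using sv1_Aw_le[OF aw] lw sv_pos[OF d] svf_pos[OF d, of s] assms
      by (intro mult_left_mono powr_mono2) auto
    finally show "svf (s + t) (Aw w) \<le> svf s (Aw w) * (max_sv1 powr t) ^ n"
      using max_sv1_props by (simp add: pow_powr_swap)
    have "svf s (Aw w) * (min_det ^ n) powr t \<le> svf s (Aw w) * sv2 (Aw w) powr t"
      using sv2_Aw_ge[OF aw] lw min_det_props svf_pos[OF d, of s] assms
      by (intro mult_left_mono powr_mono2) auto
    also have "\<dots> \<le> svf (s + t) (Aw w)"
      by (rule svf_add_bounds(1)[OF d assms])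
    finally show "svf s (Aw w) * (min_det powr t) ^ n \<le> svf (s + t) (Aw w)"
      using min_det_props by (simp add: pow_powr_swap)
  qed
  then show "svf_sum (s + t) n \<le> svf_sum s n * (max_sv1 powr t) ^ n"
    and "svf_sum s n * (min_det powr t) ^ n \<le> svf_sum (s + t) n"
    unfolding svf_sum_def sum_distrib_right by (auto intro: sum_mono)
qed

end

context contracting_tuple
begin

definition sv1_quasi_multiplicative :: bool where
  "sv1_quasi_multiplicative \<longleftrightarrow> (\<exists>k c. c > 0 \<and> (\<forall>w\<in>all_words N. \<forall>v\<in>all_words N.
      \<exists>l\<in>all_words N. length l \<le> k \<and> c * sv1 (Aw w) * sv1 (Aw v) \<le> sv1 (Aw (w @ l @ v))))"

lemma svf_quasi_mult:
  assumes s: "s \<ge> 0" and c: "c > 0"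
    and words: "w \<in> all_words N" "v \<in> all_words N" "l \<in> all_words N" and "length l \<le> k"
    and quasi_mult: "c * sv1 (Aw w) * sv1 (Aw v) \<le> sv1 (Aw (w @ l @ v))"
  shows "c powr (2 * sv1_exponent s - s) * (min_det ^ k) powr (s - sv1_exponent s)
           * (svf s (Aw w) * svf s (Aw v)) \<le> svf s (Aw (w @ l @ v))"
proof -
  define a where "a = 2 * sv1_exponent s - s"
  define b where "b = s - sv1_exponent s"
  have a0: "a \<ge> 0" and b0: "b \<ge> 0"
    using sv1_exponent_bounds[OF s] by (auto simp: a_def b_def)
  have "(c * sv1 (Aw w) * sv1 (Aw v)) powr a \<le> sv1 (Aw (w @ l @ v)) powr a"
    using c quasi_mult by (intro powr_mono2[OF a0]) (auto simp: sv1_nonneg)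
  then have sv1_part: "c powr a * sv1 (Aw w) powr a * sv1 (Aw v) powr a \<le> sv1 (Aw (w @ l @ v)) powr a"
    using c by (simp add: powr_mult sv1_nonneg)
  have "min_det ^ k \<le> min_det ^ length l"
    using min_det_props min_det_le_1 \<open>length l \<le> k\<close> by (simp add: power_decreasing)
  also have "\<dots> \<le> \<bar>det (Aw l)\<bar>"
    using det_Aw(2)[OF words(3)] .
  finally have "(min_det ^ k) powr b \<le> \<bar>det (Aw l)\<bar> powr b"
    using min_det_props by (intro powr_mono2[OF b0]) auto
  then have "\<bar>det (Aw w)\<bar> powr b * (min_det ^ k) powr b * \<bar>det (Aw v)\<bar> powr b
      \<le> \<bar>det (Aw w)\<bar> powr b * \<bar>det (Aw l)\<bar> powr b * \<bar>det (Aw v)\<bar> powr b"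
    by (intro mult_right_mono mult_left_mono) auto
  also have "\<dots> = \<bar>det (Aw (w @ l @ v))\<bar> powr b"
    by (simp add: matprod_append det_mul abs_mult powr_mult)
  finally have det_part: "\<bar>det (Aw w)\<bar> powr b * (min_det ^ k) powr b * \<bar>det (Aw v)\<bar> powr b
      \<le> \<bar>det (Aw (w @ l @ v))\<bar> powr b" .
  have "c powr a * (min_det ^ k) powr b * (svf s (Aw w) * svf s (Aw v))
      = (c powr a * sv1 (Aw w) powr a * sv1 (Aw v) powr a)
        * (\<bar>det (Aw w)\<bar> powr b * (min_det ^ k) powr b * \<bar>det (Aw v)\<bar> powr b)"
    using words by (simp add: svf_eq_powr_det det_Aw a_def b_def algebra_simps)
  also have "\<dots> \<le> sv1 (Aw (w @ l @ v)) powr a * \<bar>det (Aw (w @ l @ v))\<bar> powr b"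
    by (rule mult_mono[OF sv1_part det_part]) auto
  also have "\<dots> = svf s (Aw (w @ l @ v))"
    using words by (simp add: svf_eq_powr_det det_Aw a_def b_def)
  finally show ?thesis
    by (simp add: a_def b_def)
qed

lemma inj_on_insert_connector:
  "inj_on (\<lambda>(w, v). (length (L w v), w @ L w v @ v)) (words N n \<times> words N m)"
proof (rule inj_onI)
  fix p q assume "p \<in> words N n \<times> words N m" "q \<in> words N n \<times> words N m"
    and eq: "(\<lambda>(w, v). (length (L w v), w @ L w v @ v)) p = (\<lambda>(w, v). (length (L w v), w @ L w v @ v)) q"
  then obtain w1 v1 w2 v2 where pq: "p = (w1, v1)" "q = (w2, v2)"
    and lengths: "length w1 = n" "length w2 = n" "length v1 = m" "length v2 = m"
    by (auto simp: words_def)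
  have "length (L w1 v1) = length (L w2 v2)" "w1 @ L w1 v1 @ v1 = w2 @ L w2 v2 @ v2"
    using eq pq by auto
  then show "p = q"
    using pq lengths by (metis append_eq_append_conv length_append)
qed

text \<open>Inserting the connecting word between the two factors is injective once the length of the
  connector is recorded, so the products are dominated by sums over slightly longer words.\<close>

lemma svf_sum_mult_le_connected:
  assumes s: "s \<ge> 0" and c: "c > 0"
    and connect: "\<And>w v. w \<in> all_words N \<Longrightarrow> v \<in> all_words N \<Longrightarrow> L w v \<in> all_words N \<and>
      length (L w v) \<le> k \<and> c * sv1 (Aw w) * sv1 (Aw v) \<le> sv1 (Aw (w @ L w v @ v))"
  shows "c powr (2 * sv1_exponent s - s) * (min_det ^ k) powr (s - sv1_exponent s)
           * (svf_sum s n * svf_sum s m) \<le> (\<Sum>j\<le>k. svf_sum s (n + j + m))"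
proof -
  define c' where "c' = c powr (2 * sv1_exponent s - s) * (min_det ^ k) powr (s - sv1_exponent s)"
  define g where "g = (\<lambda>(w, v). (length (L w v), w @ L w v @ v))"
  define S where "S = words N n \<times> words N m"
  define T where "T = Sigma {..k} (\<lambda>j. words N (n + j + m))"
  have inj: "inj_on g S"
    unfolding g_def S_def by (rule inj_on_insert_connector)
  have image: "g ` S \<subseteq> T"
  proof
    fix y assume "y \<in> g ` S"
    then obtain w v where wv: "w \<in> words N n" "v \<in> words N m" "y = g (w, v)"
      by (auto simp: S_def)
    then have "L w v \<in> all_words N" "length (L w v) \<le> k"
      using connect words_subset_all_words by blast+
    then show "y \<in> T"
      using wv by (auto simp: g_def T_def words_def all_words_def)
  qed
  have "c' * (svf_sum s n * svf_sum s m)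
      = (\<Sum>w\<in>words N n. \<Sum>v\<in>words N m. c' * (svf s (Aw w) * svf s (Aw v)))"
    unfolding svf_sum_def sum_product by (simp add: sum_distrib_left)
  also have "\<dots> \<le> (\<Sum>w\<in>words N n. \<Sum>v\<in>words N m. svf s (Aw (w @ L w v @ v)))"
  proof (intro sum_mono)
    fix w v assume "w \<in> words N n" "v \<in> words N m"
    then have w: "w \<in> all_words N" and v: "v \<in> all_words N"
      using words_subset_all_words by auto
    show "c' * (svf s (Aw w) * svf s (Aw v)) \<le> svf s (Aw (w @ L w v @ v))"
      unfolding c'_def using connect[OF w v] by (intro svf_quasi_mult[OF s c w v]) auto
  qed
  also have "\<dots> = (\<Sum>p\<in>S. (\<lambda>(j, x). svf s (Aw x)) (g p))"
    by (simp add: S_def g_def sum.cartesian_product split_def)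
  also have "\<dots> = (\<Sum>y\<in>g ` S. (\<lambda>(j, x). svf s (Aw x)) y)"
    by (rule sum.reindex[OF inj, symmetric, unfolded o_def])
  also have "\<dots> \<le> (\<Sum>y\<in>T. (\<lambda>(j, x). svf s (Aw x)) y)"
    using image words_subset_all_words
    by (intro sum_mono2) (auto simp: T_def intro!: less_imp_le[OF svf_Aw_pos] dest!: subsetD)
  also have "\<dots> = (\<Sum>j\<le>k. svf_sum s (n + j + m))"
    by (simp add: T_def sum.Sigma[symmetric] svf_sum_def)
  finally show ?thesis
    by (simp add: c'_def)
qed

lemma svf_sum_supermult:
  assumes quasi_mult: sv1_quasi_multiplicative and s: "s \<ge> 0"
  shows "\<exists>D\<ge>1. \<forall>n m. svf_sum s n * svf_sum s m \<le> D * svf_sum s (n + m)"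
proof -
  obtain k c where c: "c > 0" and "\<forall>w\<in>all_words N. \<forall>v\<in>all_words N. \<exists>l\<in>all_words N.
      length l \<le> k \<and> c * sv1 (Aw w) * sv1 (Aw v) \<le> sv1 (Aw (w @ l @ v))"
    using quasi_mult unfolding sv1_quasi_multiplicative_def by blast
  then obtain L where L: "\<And>w v. w \<in> all_words N \<Longrightarrow> v \<in> all_words N \<Longrightarrow> L w v \<in> all_words N \<and>
      length (L w v) \<le> k \<and> c * sv1 (Aw w) * sv1 (Aw v) \<le> sv1 (Aw (w @ L w v @ v))"
    by metis
  define c' where "c' = c powr (2 * sv1_exponent s - s) * (min_det ^ k) powr (s - sv1_exponent s)"
  have c'0: "c' > 0"
    using c min_det_props by (simp add: c'_def)
  define D where "D = max 1 ((\<Sum>j\<le>k. svf_sum s j) / c')"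
  have "svf_sum s n * svf_sum s m \<le> D * svf_sum s (n + m)" for n m
  proof -
    have "c' * (svf_sum s n * svf_sum s m) \<le> (\<Sum>j\<le>k. svf_sum s (n + j + m))"
      unfolding c'_def by (rule svf_sum_mult_le_connected[OF s c L])
    also have "\<dots> \<le> (\<Sum>j\<le>k. svf_sum s (n + m) * svf_sum s j)"
      using svf_sum_submult[OF s, of "n + m"] by (intro sum_mono) (simp add: ac_simps)
    also have "\<dots> = svf_sum s (n + m) * (\<Sum>j\<le>k. svf_sum s j)"
      by (simp add: sum_distrib_left)
    finally have "svf_sum s n * svf_sum s m \<le> (\<Sum>j\<le>k. svf_sum s j) / c' * svf_sum s (n + m)"
      using c'0 by (simp add: field_simps)
    also have "\<dots> \<le> D * svf_sum s (n + m)"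
      unfolding D_def using svf_sum_pos[of s "n + m"] by (intro mult_right_mono) auto
    finally show ?thesis .
  qed
  then show ?thesis
    by (intro exI[of _ D]) (simp add: D_def)
qed

end

section \<open>Pressure and affinity dimension of quasi-multiplicative tuples\<close>

locale quasi_multiplicative_tuple = contracting_tuple +
  assumes quasi_multiplicative: sv1_quasi_multiplicative
begin

lemma pressure_approx:
  assumes s: "s \<ge> 0"
  shows "\<exists>d\<ge>0. \<forall>n\<ge>1. pressure N A s \<le> ln (svf_sum s n) / real n
                     \<and> ln (svf_sum s n) / real n \<le> pressure N A s + d / real n"
proof -
  obtain D where D: "D \<ge> 1" "\<And>n m. svf_sum s n * svf_sum s m \<le> D * svf_sum s (n + m)"
    using svf_sum_supermult[OF quasi_multiplicative s] by blast
  define a where "a n = ln (svf_sum s n)" for n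
  have sub: "a (n + m) \<le> a n + a m" for n m
  proof -
    have "ln (svf_sum s (n + m)) \<le> ln (svf_sum s n * svf_sum s m)"
      using svf_sum_submult[OF s] svf_sum_pos by (subst ln_le_cancel_iff) (auto intro: mult_pos_pos)
    then show ?thesis
      using svf_sum_pos[of s n] svf_sum_pos[of s m] by (simp add: a_def ln_mult)
  qed
  have super: "a n + a m - ln D \<le> a (n + m)" for n m
  proof -
    have "ln (svf_sum s n * svf_sum s m) \<le> ln (D * svf_sum s (n + m))"
      using D svf_sum_pos by (subst ln_le_cancel_iff) (auto intro: mult_pos_pos)
    then show ?thesis
      using D svf_sum_pos[of s n] svf_sum_pos[of s m] svf_sum_pos[of s "n + m"]
      by (simp add: a_def ln_mult)
  qed
  obtain L where L: "(\<lambda>n. a n / real n) \<longlonglongrightarrow> L"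
    and bounds: "\<forall>n\<ge>1. L \<le> a n / real n \<and> a n / real n \<le> L + ln D / real n"
    using almost_additive_limit[of a, OF _ sub super] by (auto simp: a_def svf_sum_0)
  have "pressure N A s = L"
    using limI[OF L] by (simp add: pressure_def a_def svf_sum_def)
  then show ?thesis
    using bounds D by (intro exI[of _ "ln D"]) (auto simp: a_def)
qed

lemma pressure_add_bounds:
  assumes s: "s \<ge> 0" and t: "t \<ge> 0"
  shows "pressure N A (s + t) \<le> pressure N A s + t * ln max_sv1"
    and "pressure N A s + t * ln min_det \<le> pressure N A (s + t)"
proof -
  let ?P = "pressure N A" and ?avg = "\<lambda>s n. ln (svf_sum s n) / real n"
  obtain d1 where d1: "\<forall>n\<ge>1. ?P s \<le> ?avg s n \<and> ?avg s n \<le> ?P s + d1 / real n"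
    using pressure_approx[OF s] by blast
  obtain d2 where d2: "\<forall>n\<ge>1. ?P (s + t) \<le> ?avg (s + t) n \<and> ?avg (s + t) n \<le> ?P (s + t) + d2 / real n"
    using pressure_approx[of "s + t"] s t by auto
  have upper: "?avg (s + t) n \<le> ?avg s n + t * ln max_sv1"
    and lower: "?avg s n + t * ln min_det \<le> ?avg (s + t) n" if n: "n \<ge> 1" for n
  proof -
    have "ln (svf_sum (s + t) n) \<le> ln (svf_sum s n * (max_sv1 powr t) ^ n)"
      using svf_sum_add_bounds(1)[OF s t, of n] svf_sum_pos max_sv1_props(1)
      by (subst ln_le_cancel_iff) auto
    also have "\<dots> = ln (svf_sum s n) + real n * (t * ln max_sv1)"
      using svf_sum_pos[of s n] max_sv1_props(1) by (simp add: ln_mult ln_realpow ln_powr)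
    finally have "?avg (s + t) n \<le> (ln (svf_sum s n) + real n * (t * ln max_sv1)) / real n"
      by (rule divide_right_mono) simp
    then show "?avg (s + t) n \<le> ?avg s n + t * ln max_sv1"
      using n by (simp add: add_divide_distrib)
    have "ln (svf_sum s n) + real n * (t * ln min_det) = ln (svf_sum s n * (min_det powr t) ^ n)"
      using svf_sum_pos[of s n] min_det_props(1) by (simp add: ln_mult ln_realpow ln_powr)
    also have "\<dots> \<le> ln (svf_sum (s + t) n)"
      using svf_sum_add_bounds(2)[OF s t, of n] svf_sum_pos min_det_props(1)
      by (subst ln_le_cancel_iff) auto
    finally have "(ln (svf_sum s n) + real n * (t * ln min_det)) / real n \<le> ?avg (s + t) n"
      by (rule divide_right_mono) simp
    then show "?avg s n + t * ln min_det \<le> ?avg (s + t) n"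
      using n by (simp add: add_divide_distrib)
  qed
  show "?P (s + t) \<le> ?P s + t * ln max_sv1"
  proof (rule le_of_le_add_over_n[of _ _ d1])
    fix n :: nat assume "n \<ge> 1"
    then show "?P (s + t) \<le> ?P s + t * ln max_sv1 + d1 / real n"
      using d1 d2 upper[of n] by fastforce
  qed
  show "?P s + t * ln min_det \<le> ?P (s + t)"
  proof (rule le_of_le_add_over_n[of _ _ d2])
    fix n :: nat assume "n \<ge> 1"
    then show "?P s + t * ln min_det \<le> ?P (s + t) + d2 / real n"
      using d1 d2 lower[of n] by fastforce
  qed
qed

lemma pressure_at_0: "pressure N A 0 = ln (real N)"
proof -
  obtain d where d: "\<forall>n\<ge>1. pressure N A 0 \<le> ln (svf_sum 0 n) / real n
      \<and> ln (svf_sum 0 n) / real n \<le> pressure N A 0 + d / real n"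
    using pressure_approx[of 0] by auto
  have avg: "ln (svf_sum 0 n) / real n = ln (real N)" if "n \<ge> 1" for n
    using that two_le_N by (simp add: svf_sum_at_0 ln_realpow)
  have "pressure N A 0 \<le> ln (real N)"
    using conjunct1[OF d[rule_format, of 1]] avg[of 1] by simp
  moreover have "ln (real N) \<le> pressure N A 0"
  proof (rule le_of_le_add_over_n[of _ _ d])
    fix n :: nat assume "n \<ge> 1"
    then show "ln (real N) \<le> pressure N A 0 + d / real n"
      using conjunct2[OF d[rule_format, of n]] avg[of n] by simp
  qed
  ultimately show ?thesis
    by simp
qed

lemma pressure_strict_antimono:
  assumes "0 \<le> a" "a < b"
  shows "pressure N A b < pressure N A a"
proof -
  have "pressure N A (a + (b - a)) \<le> pressure N A a + (b - a) * ln max_sv1"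
    using assms by (intro pressure_add_bounds(1)) auto
  moreover have "(b - a) * ln max_sv1 < 0"
    using assms max_sv1_props by (simp add: mult_pos_neg)
  ultimately show ?thesis
    by simp
qed

lemma pressure_lipschitz: "\<bar>ln min_det\<bar>-lipschitz_on {0..} (pressure N A)"
proof (rule lipschitz_onI)
  have ordered: "\<bar>pressure N A x - pressure N A y\<bar> \<le> \<bar>ln min_det\<bar> * \<bar>x - y\<bar>"
    if "0 \<le> x" "x \<le> y" for x y
  proof -
    have "pressure N A x + (y - x) * ln min_det \<le> pressure N A y"
      using pressure_add_bounds(2)[of x "y - x"] that by simp
    moreover have "pressure N A y \<le> pressure N A x"
      using pressure_strict_antimono[of x y] that by (cases "x = y") auto
    moreover have "(y - x) * (- ln min_det) \<le> (y - x) * \<bar>ln min_det\<bar>"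
      using that by (intro mult_left_mono) auto
    moreover have "\<bar>x - y\<bar> = y - x"
      using that by simp
    ultimately show ?thesis
      by (simp add: algebra_simps)
  qed
  fix x y :: real assume "x \<in> {0..}" "y \<in> {0..}"
  then show "dist (pressure N A x) (pressure N A y) \<le> \<bar>ln min_det\<bar> * dist x y"
    using ordered[of x y] ordered[of y x] unfolding dist_real_def
    by (cases "x \<le> y") (simp_all add: abs_minus_commute)
qed simp

lemma affinity_dim_root: "affinity_dim N A \<ge> 0" "pressure N A (affinity_dim N A) = 0"
proof -
  have ln_max: "ln max_sv1 < 0"
    using max_sv1_props by simp
  define S where "S = ln (real N) / (- ln max_sv1)"
  have "ln (real N) > 0"
    using two_le_N by simp
  then have S0: "S \<ge> 0"
    using ln_max unfolding S_def by (intro divide_nonneg_pos) auto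
  have "pressure N A (0 + S) \<le> pressure N A 0 + S * ln max_sv1"
    using S0 by (intro pressure_add_bounds(1)) auto
  then have PS: "pressure N A S \<le> 0"
    using ln_max by (simp add: pressure_at_0 S_def)
  have cont: "continuous_on {0..S} (pressure N A)"
    by (rule lipschitz_on_continuous_on[OF lipschitz_on_subset[OF pressure_lipschitz]]) auto
  have P0: "0 \<le> pressure N A 0"
    using two_le_N by (simp add: pressure_at_0)
  obtain s0 where s0: "0 \<le> s0" "s0 \<le> S" "pressure N A s0 = 0"
    using IVT2'[OF PS P0 S0 cont] by blast
  have unique: "s = s0" if "s \<ge> 0" "pressure N A s = 0" for s
  proof (rule ccontr)
    assume "s \<noteq> s0"
    then have "s < s0 \<or> s0 < s"
      by linarith
    then show False
      using pressure_strict_antimono[of s s0] pressure_strict_antimono[of s0 s] that s0 by auto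
  qed
  have "affinity_dim N A = s0"
    unfolding affinity_dim_def using s0(1,3) unique by blast
  then show "affinity_dim N A \<ge> 0" "pressure N A (affinity_dim N A) = 0"
    using s0 by simp_all
qed

lemma svf_sum_affinity_dim_bounded: "\<exists>C. \<forall>n. svf_sum (affinity_dim N A) n \<le> C"
proof -
  let ?s = "affinity_dim N A"
  obtain d where d0: "d \<ge> 0" and d: "\<forall>n\<ge>1. ln (svf_sum ?s n) / real n \<le> d / real n"
    using pressure_approx[OF affinity_dim_root(1)] affinity_dim_root(2) by auto
  have "svf_sum ?s n \<le> exp d" for n
  proof (cases "n = 0")
    case True
    then show ?thesis
      using d0 by (simp add: svf_sum_0)
  next
    case False
    then have "ln (svf_sum ?s n) \<le> d"
      using d by (simp add: divide_le_cancel)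
    then show ?thesis
      using svf_sum_pos by (metis exp_le_cancel_iff exp_ln)
  qed
  then show ?thesis
    by blast
qed

end

section \<open>Irreducible tuples are quasi-multiplicative\<close>

context contracting_tuple
begin

lemma irreducible_no_annihilating_pair:
  assumes irr: "irreducible_tuple N A" and "y0 \<noteq> 0" and "z0 \<noteq> 0"
  shows "\<exists>l\<in>all_words N. z0 \<bullet> (Aw l *v y0) \<noteq> 0"
proof (rule ccontr)
  assume "\<not> ?thesis"
  then have zero: "z0 \<bullet> (Aw l *v y0) = 0" if "l \<in> all_words N" for l
    using that by blast
  define L where "L = span {Aw l *v y0 | l. l \<in> all_words N}"
  have subL: "subspace L"
    unfolding L_def by (rule subspace_span)
  have y0L: "y0 \<in> L"
    unfolding L_def by (rule span_base) (auto intro!: exI[of _ "[]"] simp: all_words_def)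
  have "L \<subseteq> {x. z0 \<bullet> x = 0}"
    unfolding L_def by (rule span_minimal) (auto simp: zero intro: subspace_hyperplane)
  then have z0L: "z0 \<notin> L"
    using \<open>z0 \<noteq> 0\<close> by auto
  have "(\<lambda>x. A i *v x) ` L \<subseteq> L" if i: "i < N" for i
  proof -
    have "subspace {x. A i *v x \<in> L}"
      using subL by (auto simp: subspace_def matrix_vector_right_distrib matrix_vector_mult_scaleR)
    moreover have "Aw l *v y0 \<in> {x. A i *v x \<in> L}" if "l \<in> all_words N" for l
    proof -
      have "A i *v (Aw l *v y0) = Aw (i # l) *v y0"
        by (simp add: matrix_vector_mul_assoc)
      then show ?thesis
        using i that unfolding L_def by (auto intro!: span_base exI[of _ "i # l"])
    qed
    ultimately have "L \<subseteq> {x. A i *v x \<in> L}"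
      unfolding L_def by (intro span_minimal) auto
    then show ?thesis
      by auto
  qed
  moreover have "dim L = 1"
  proof -
    have "dim L \<noteq> 0"
      using y0L \<open>y0 \<noteq> 0\<close> by auto
    moreover have "dim L \<noteq> 2"
      using subspace_dim_equal[OF subL subspace_UNIV] z0L by auto
    moreover have "dim L \<le> 2"
      using dim_subset_UNIV_cart[of L] by simp
    ultimately show ?thesis
      by linarith
  qed
  ultimately show False
    using irr subL unfolding irreducible_tuple_def by blast
qed

lemma irreducible_uniformly_transversal:
  assumes irr: "irreducible_tuple N A"
  shows "\<exists>k c. c > 0 \<and> (\<forall>y z::real^2. norm y = 1 \<longrightarrow> norm z = 1 \<longrightarrow>
           (\<exists>l\<in>all_words N. length l \<le> k \<and> c \<le> \<bar>z \<bullet> (Aw l *v y)\<bar>))"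
proof (rule ccontr)
  define K where "K = sphere (0::real^2) 1 \<times> sphere (0::real^2) 1"
  define small where "small k p \<longleftrightarrow> p \<in> K \<and>
      (\<forall>l\<in>all_words N. length l \<le> k \<longrightarrow> \<bar>snd p \<bullet> (Aw l *v fst p)\<bar> < 1 / (real k + 1))" for k p
  assume "\<not> ?thesis"
  then have "\<exists>p. small k p" for k
    unfolding small_def K_def
    by (fastforce simp: not_le dest: spec[of _ k] spec[of _ "1 / (real k + 1)"])
  then obtain F where F: "\<And>k. small k (F k)"
    by metis
  have "seq_compact K"
    unfolding K_def by (intro compact_imp_seq_compact compact_Times compact_sphere)
  then obtain p0 r where p0: "p0 \<in> K" and r: "strict_mono r" and lim: "(F \<circ> r) \<longlonglongrightarrow> p0"
    using F unfolding seq_compact_def small_def by blast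
  define y0 where "y0 = fst p0"
  define z0 where "z0 = snd p0"
  have "z0 \<bullet> (Aw l *v y0) = 0" if l: "l \<in> all_words N" for l
  proof -
    have "(\<lambda>k. \<bar>snd (F (r k)) \<bullet> (Aw l *v fst (F (r k)))\<bar>) \<longlonglongrightarrow> \<bar>z0 \<bullet> (Aw l *v y0)\<bar>"
      using lim unfolding y0_def z0_def o_def
      by (intro tendsto_rabs tendsto_inner tendsto_snd tendsto_fst
          bounded_linear.tendsto[OF matrix_vector_mul_bounded_linear])
    moreover have "(\<lambda>k. 1 / (real k + 1)) \<longlonglongrightarrow> 0"
      using LIMSEQ_Suc[OF lim_1_over_n] by (simp add: add.commute)
    moreover have "\<bar>snd (F (r k)) \<bullet> (Aw l *v fst (F (r k)))\<bar> \<le> 1 / (real k + 1)"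
      if "k \<ge> length l" for k
    proof -
      have "k \<le> r k"
        using seq_suble[OF r] by simp
      then have "\<bar>snd (F (r k)) \<bullet> (Aw l *v fst (F (r k)))\<bar> < 1 / (real (r k) + 1)"
        using F[of "r k"] l that unfolding small_def by auto
      also have "\<dots> \<le> 1 / (real k + 1)"
        using \<open>k \<le> r k\<close> by (intro divide_left_mono) auto
      finally show ?thesis
        by simp
    qed
    ultimately have "\<bar>z0 \<bullet> (Aw l *v y0)\<bar> \<le> 0"
      by (intro LIMSEQ_le) auto
    then show ?thesis
      by simp
  qed
  moreover have "y0 \<noteq> 0" "z0 \<noteq> 0"
    using p0 by (auto simp: K_def y0_def z0_def mem_Times_iff)
  ultimately show False
    using irreducible_no_annihilating_pair[OF irr] by blast
qed

text \<open>Take unit vectors on which both factors attain their top singular value; a connecting word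
  keeping the image of the one transversal to the direction dual to the other costs only the
  constant of uniform transversality.\<close>

lemma irreducible_quasi_multiplicative:
  assumes irr: "irreducible_tuple N A"
  shows sv1_quasi_multiplicative
proof -
  obtain k c where c: "c > 0" and transversal: "\<And>y z::real^2. norm y = 1 \<Longrightarrow> norm z = 1 \<Longrightarrow>
      \<exists>l\<in>all_words N. length l \<le> k \<and> c \<le> \<bar>z \<bullet> (Aw l *v y)\<bar>"
    using irreducible_uniformly_transversal[OF irr] by blast
  have "\<exists>l\<in>all_words N. length l \<le> k \<and> c * sv1 (Aw w) * sv1 (Aw v) \<le> sv1 (Aw (w @ l @ v))"
    if w: "w \<in> all_words N" and v: "v \<in> all_words N" for w v
  proof -
    have pw: "sv1 (Aw w) > 0" and pv: "sv1 (Aw v) > 0"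
      using sv_pos det_Aw(1) w v by auto
    obtain x where x: "norm x = 1" "norm (Aw v *v x) = sv1 (Aw v)"
      using sv1_attained by blast
    obtain x' where x': "norm x' = 1" "norm (Aw w *v x') = sv1 (Aw w)"
      using sv1_attained by blast
    define y where "y = (1 / sv1 (Aw v)) *\<^sub>R (Aw v *v x)"
    define z0 where "z0 = (1 / sv1 (Aw w)) *\<^sub>R (Aw w *v x')"
    define g where "g = z0 v* Aw w"
    define z where "z = (1 / norm g) *\<^sub>R g"
    have "g \<bullet> x' = sv1 (Aw w)"
      using x' pw by (simp add: g_def dot_lmul_matrix z0_def power2_norm_eq_inner[symmetric]
          power2_eq_square)
    then have ng: "sv1 (Aw w) \<le> norm g"
      using norm_cauchy_schwarz[of g x'] x' by simp
    have "norm y = 1" "norm z = 1"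
      using x pv pw ng by (auto simp: y_def z_def)
    then obtain l where l: "l \<in> all_words N" "length l \<le> k" "c \<le> \<bar>z \<bullet> (Aw l *v y)\<bar>"
      using transversal by blast
    have "z0 \<bullet> (Aw (w @ l @ v) *v x) = sv1 (Aw v) * norm g * (z \<bullet> (Aw l *v y))"
      using pv ng pw
      by (auto simp: matprod_append matrix_vector_mul_assoc[symmetric] y_def z_def g_def
          matrix_vector_mult_scaleR dot_lmul_matrix)
    moreover have "c * sv1 (Aw w) \<le> \<bar>z \<bullet> (Aw l *v y)\<bar> * norm g"
      using l(3) ng c pw by (intro mult_mono) auto
    ultimately have "c * sv1 (Aw w) * sv1 (Aw v) \<le> \<bar>z0 \<bullet> (Aw (w @ l @ v) *v x)\<bar>"
      using pv by (simp add: abs_mult algebra_simps)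
    also have "\<dots> \<le> sv1 (Aw (w @ l @ v))"
      using x' pw x by (intro inner_mult_vec_le_sv1) (auto simp: z0_def)
    finally show ?thesis
      using l by blast
  qed
  then show ?thesis
    unfolding sv1_quasi_multiplicative_def using c by blast
qed

end

section \<open>Matrices preserving a line\<close>

definition perp :: "real^2 \<Rightarrow> real^2" where "perp x = vector [- x$2, x$1]"

lemma perp_nth [simp]: "perp x $ 1 = - x$2" "perp x $ 2 = x$1"
  by (simp_all add: perp_def)

lemma perp_scaleR: "perp (c *\<^sub>R x) = c *\<^sub>R perp x"
  by (simp add: real2_eq_iff)

lemma inner_perp_self: "x \<bullet> perp x = 0"
  by (simp add: inner_real2 algebra_simps)

lemma inner_mult_vec_perp:
  assumes "norm e = 1"
  shows "(M *v perp e) \<bullet> perp (M *v e) = det M"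
proof -
  have "(M *v perp e) \<bullet> perp (M *v e) = det M * ((e$1)^2 + (e$2)^2)"
    by (simp add: inner_real2 matrix_vector_mult_2 det_2 algebra_simps power2_eq_square)
  then show ?thesis
    using assms norm_real2_sq[of e] by simp
qed

locale unit_vector =
  fixes u :: "real^2"
  assumes norm_u: "norm u = 1"
begin

abbreviation "u' \<equiv> perp u"

lemma norm_perp_u: "norm u' = 1"
proof -
  have "(norm u')^2 = 1"
    using norm_u norm_real2_sq[of u] norm_real2_sq[of u'] by (simp add: add.commute)
  then show ?thesis
    using norm_ge_zero[of u'] by (auto simp: power2_eq_1_iff)
qed

lemma inner_u_u: "u \<bullet> u = 1" and inner_perp_perp: "u' \<bullet> u' = 1"
  and inner_u_perp: "u \<bullet> u' = 0" "u' \<bullet> u = 0"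
  using norm_u norm_perp_u inner_perp_self[of u] by (simp_all add: dot_square_norm inner_commute)

lemma components_u_sq: "(u$1)^2 + (u$2)^2 = 1"
  using norm_u norm_real2_sq[of u] by simp

lemma orthonormal_expansion: "x = (u \<bullet> x) *\<^sub>R u + (u' \<bullet> x) *\<^sub>R u'"
proof -
  have "(u \<bullet> x) * u$1 + (u' \<bullet> x) * u'$1 = x$1 * ((u$1)^2 + (u$2)^2)"
    "(u \<bullet> x) * u$2 + (u' \<bullet> x) * u'$2 = x$2 * ((u$1)^2 + (u$2)^2)"
    by (simp_all add: inner_real2 algebra_simps power2_eq_square)
  then show ?thesis
    by (simp add: real2_eq_iff components_u_sq)
qed

lemma norm_sq_orthonormal: "(norm x)^2 = (u \<bullet> x)^2 + (u' \<bullet> x)^2"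
proof -
  have "(u \<bullet> x)^2 + (u' \<bullet> x)^2 = ((x$1)^2 + (x$2)^2) * ((u$1)^2 + (u$2)^2)"
    by (simp add: inner_real2 algebra_simps power2_eq_square)
  then show ?thesis
    by (simp add: components_u_sq norm_real2_sq)
qed

definition diag1 :: "mat2 \<Rightarrow> real" where "diag1 M = u \<bullet> (M *v u)"
definition offdiag :: "mat2 \<Rightarrow> real" where "offdiag M = u \<bullet> (M *v u')"
definition diag2 :: "mat2 \<Rightarrow> real" where "diag2 M = u' \<bullet> (M *v u')"
definition preserves_line :: "mat2 \<Rightarrow> bool" where "preserves_line M \<longleftrightarrow> u' \<bullet> (M *v u) = 0"

lemma preserves_line_mult_u: "preserves_line M \<Longrightarrow> M *v u = diag1 M *\<^sub>R u"
  using orthonormal_expansion[of "M *v u"] by (simp add: preserves_line_def diag1_def)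

lemma mult_perp_u: "M *v u' = offdiag M *\<^sub>R u + diag2 M *\<^sub>R u'"
  using orthonormal_expansion[of "M *v u'"] by (simp add: offdiag_def diag2_def)

lemma preserves_line_mat1:
  "preserves_line (mat 1)" "diag1 (mat 1) = 1" "diag2 (mat 1) = 1" "offdiag (mat 1) = 0"
  by (simp_all add: preserves_line_def diag1_def diag2_def offdiag_def inner_u_u inner_perp_perp inner_u_perp)

lemma preserves_line_mult:
  assumes "preserves_line P" "preserves_line Q"
  shows "preserves_line (P ** Q)" "diag1 (P ** Q) = diag1 P * diag1 Q"
    "diag2 (P ** Q) = diag2 P * diag2 Q" "offdiag (P ** Q) = diag1 P * offdiag Q + offdiag P * diag2 Q"
proof -
  have u: "(P ** Q) *v u = (diag1 P * diag1 Q) *\<^sub>R u"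
    using preserves_line_mult_u[OF assms(1)] preserves_line_mult_u[OF assms(2)]
    by (simp add: matrix_vector_mul_assoc[symmetric] matrix_vector_mult_scaleR)
  have u': "(P ** Q) *v u' = (diag1 P * offdiag Q + offdiag P * diag2 Q) *\<^sub>R u + (diag2 P * diag2 Q) *\<^sub>R u'"
    using preserves_line_mult_u[OF assms(1)] mult_perp_u[of Q] mult_perp_u[of P]
    by (simp add: matrix_vector_mul_assoc[symmetric] matrix_vector_mult_scaleR
        matrix_vector_right_distrib scaleR_add_right algebra_simps)
  show "preserves_line (P ** Q)" "diag1 (P ** Q) = diag1 P * diag1 Q"
    "diag2 (P ** Q) = diag2 P * diag2 Q" "offdiag (P ** Q) = diag1 P * offdiag Q + offdiag P * diag2 Q"
    unfolding preserves_line_def diag1_def diag2_def offdiag_def u u'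
    by (simp_all add: inner_add_right inner_u_u inner_perp_perp inner_u_perp)
qed

lemma preserves_line_det: "preserves_line M \<Longrightarrow> det M = diag1 M * diag2 M"
proof -
  have "diag1 M * diag2 M - offdiag M * (u' \<bullet> (M *v u)) = det M * ((u$1)^2 + (u$2)^2)^2"
    by (simp add: diag1_def diag2_def offdiag_def inner_real2 matrix_vector_mult_2 det_2
        algebra_simps power2_eq_square)
  then show "preserves_line M \<Longrightarrow> det M = diag1 M * diag2 M"
    by (simp add: preserves_line_def components_u_sq)
qed

lemma preserves_line_sv1_le:
  assumes "preserves_line M"
  shows "sv1 M \<le> \<bar>diag1 M\<bar> + \<bar>offdiag M\<bar> + \<bar>diag2 M\<bar>"
proof -
  obtain x :: "real^2" where x: "norm x = 1" "norm (M *v x) = sv1 M"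
    using sv1_attained by blast
  have e: "M *v x = ((u \<bullet> x) * diag1 M) *\<^sub>R u + (u' \<bullet> x) *\<^sub>R (offdiag M *\<^sub>R u + diag2 M *\<^sub>R u')"
    using preserves_line_mult_u[OF assms] mult_perp_u[of M]
    by (subst orthonormal_expansion[of x]) (simp add: matrix_vector_right_distrib matrix_vector_mult_scaleR)
  have cu: "\<bar>u \<bullet> x\<bar> \<le> 1" and cu': "\<bar>u' \<bullet> x\<bar> \<le> 1"
    using Cauchy_Schwarz_ineq2[of u x] Cauchy_Schwarz_ineq2[of u' x] norm_u norm_perp_u x by simp_all
  have "norm (((u \<bullet> x) * diag1 M) *\<^sub>R u) \<le> \<bar>diag1 M\<bar>"
    using norm_u cu by (simp add: abs_mult mult_left_le_one_le)
  moreover have "norm (offdiag M *\<^sub>R u + diag2 M *\<^sub>R u') \<le> \<bar>offdiag M\<bar> + \<bar>diag2 M\<bar>"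
    using norm_triangle_ineq[of "offdiag M *\<^sub>R u" "diag2 M *\<^sub>R u'"] norm_u norm_perp_u by simp
  then have "norm ((u' \<bullet> x) *\<^sub>R (offdiag M *\<^sub>R u + diag2 M *\<^sub>R u')) \<le> \<bar>offdiag M\<bar> + \<bar>diag2 M\<bar>"
    using cu' by (simp add: mult_le_one mult_left_le_one_le order_trans[OF mult_right_mono])
  ultimately have "norm (M *v x) \<le> \<bar>diag1 M\<bar> + (\<bar>offdiag M\<bar> + \<bar>diag2 M\<bar>)"
    unfolding e by (intro order.trans[OF norm_triangle_ineq] add_mono)
  then show ?thesis
    using x by simp
qed

lemma comparable_diagonals_sv_ratio:
  assumes M: "preserves_line M" "det M \<noteq> 0" and "L \<ge> 0"
    and offdiag: "\<bar>offdiag M\<bar> \<le> L * (\<bar>diag1 M\<bar> + \<bar>diag2 M\<bar>)"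
    and ratio: "\<bar>diag1 M\<bar> = t * \<bar>diag2 M\<bar>"
  shows "t \<le> ((1 + L) * (t + 1))^2 * (sv2 M / sv1 M)"
proof -
  define \<delta> where "\<delta> = \<bar>diag2 M\<bar>"
  have \<delta>: "\<delta> > 0"
    using M preserves_line_det[OF M(1)] by (auto simp: \<delta>_def)
  have t0: "t \<ge> 0"
    using ratio \<delta> by (metis \<delta>_def abs_ge_zero zero_le_mult_iff not_less)
  have p1: "sv1 M > 0"
    using sv_pos[OF M(2)] by simp
  have "sv1 M \<le> \<bar>diag1 M\<bar> + \<bar>offdiag M\<bar> + \<bar>diag2 M\<bar>"
    by (rule preserves_line_sv1_le[OF M(1)])
  also have "\<dots> \<le> (1 + L) * (t + 1) * \<delta>"
    using offdiag ratio by (simp add: \<delta>_def algebra_simps)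
  finally have "(sv1 M)^2 \<le> ((1 + L) * (t + 1) * \<delta>)^2"
    using p1 by (intro power_mono) auto
  then have "t * (sv1 M)^2 \<le> ((1 + L) * (t + 1))^2 * (t * \<delta>^2)"
    using t0 by (simp add: mult_left_mono power_mult_distrib ac_simps)
  also have "t * \<delta>^2 = sv1 M * sv2 M"
    using sv1_mult_sv2[of M] preserves_line_det[OF M(1)] ratio by (simp add: \<delta>_def abs_mult power2_eq_square)
  finally have "(t * sv1 M) * sv1 M \<le> (((1 + L) * (t + 1))^2 * sv2 M) * sv1 M"
    by (simp add: power2_eq_square ac_simps)
  then have "t * sv1 M \<le> ((1 + L) * (t + 1))^2 * sv2 M"
    using p1 by simp
  then show ?thesis
    using p1 by (simp add: pos_le_divide_eq)
qed

lemma abs_diag1_le_sv1: "\<bar>diag1 M\<bar> \<le> sv1 M"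
  unfolding diag1_def by (rule inner_mult_vec_le_sv1[OF norm_u norm_u])

lemma abs_diag2_le_sv1: "\<bar>diag2 M\<bar> \<le> sv1 M"
  unfolding diag2_def by (rule inner_mult_vec_le_sv1[OF norm_perp_u norm_perp_u])

end

section \<open>Reducible dominated tuples are quasi-multiplicative\<close>

text \<open>The bound |p| \<le> E |q| for the off-diagonal entry p and the dominant diagonal entry q of a
  product survives multiplication by one more generator.\<close>

lemma dominant_diagonal_constant:
  fixes x y D :: "'i \<Rightarrow> real"
  assumes "finite I" and dominant: "\<And>i. i \<in> I \<Longrightarrow> \<bar>x i\<bar> < \<bar>D i\<bar>"
  obtains E where "E \<ge> 0"
    and "\<And>i p q. i \<in> I \<Longrightarrow> \<bar>p\<bar> \<le> E * \<bar>q\<bar> \<Longrightarrow> \<bar>x i * p + y i * q\<bar> \<le> E * \<bar>D i * q\<bar>"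
proof
  define lam where "lam = Max (insert 0 ((\<lambda>i. \<bar>x i\<bar> / \<bar>D i\<bar>) ` I))"
  define B where "B = Max (insert 0 ((\<lambda>i. \<bar>y i\<bar>) ` I))"
  define m where "m = Min (insert 1 ((\<lambda>i. \<bar>D i\<bar>) ` I))"
  define E where "E = B / (m * (1 - lam))"
  have lam: "0 \<le> lam" "lam < 1" "\<And>i. i \<in> I \<Longrightarrow> \<bar>x i\<bar> \<le> lam * \<bar>D i\<bar>"
  proof -
    show "0 \<le> lam"
      unfolding lam_def using assms(1) by (intro Max_ge) auto
    have "lam \<in> insert 0 ((\<lambda>i. \<bar>x i\<bar> / \<bar>D i\<bar>) ` I)"
      unfolding lam_def using assms(1) by (intro Max_in) auto
    then show "lam < 1"
      using dominant by (auto simp: divide_less_eq)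
    fix i assume "i \<in> I"
    then have "\<bar>x i\<bar> / \<bar>D i\<bar> \<le> lam"
      unfolding lam_def using assms(1) by (intro Max_ge) auto
    then show "\<bar>x i\<bar> \<le> lam * \<bar>D i\<bar>"
      using dominant[OF \<open>i \<in> I\<close>] by (simp add: divide_le_eq)
  qed
  have B: "0 \<le> B" "\<And>i. i \<in> I \<Longrightarrow> \<bar>y i\<bar> \<le> B"
    unfolding B_def using assms(1) by (auto intro: Max_ge)
  have m: "0 < m" "\<And>i. i \<in> I \<Longrightarrow> m \<le> \<bar>D i\<bar>"
  proof -
    have "m \<in> insert 1 ((\<lambda>i. \<bar>D i\<bar>) ` I)"
      unfolding m_def using assms(1) by (intro Min_in) auto
    then show "0 < m"
      using dominant by fastforce
    show "\<And>i. i \<in> I \<Longrightarrow> m \<le> \<bar>D i\<bar>"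
      unfolding m_def using assms(1) by (intro Min_le) auto
  qed
  show E0: "E \<ge> 0"
    using lam B m by (simp add: E_def)
  fix i p q assume i: "i \<in> I" and pq: "\<bar>p\<bar> \<le> E * \<bar>q\<bar>"
  have "B \<le> E * \<bar>D i\<bar> * (1 - lam)"
  proof -
    have "B = E * m * (1 - lam)"
      using lam m by (simp add: E_def)
    also have "\<dots> \<le> E * \<bar>D i\<bar> * (1 - lam)"
      using E0 lam m(2)[OF i] by (intro mult_right_mono mult_left_mono) auto
    finally show ?thesis .
  qed
  then have "\<bar>x i\<bar> * \<bar>p\<bar> + \<bar>y i\<bar> * \<bar>q\<bar> \<le> (lam * \<bar>D i\<bar>) * (E * \<bar>q\<bar>) + (E * \<bar>D i\<bar> * (1 - lam)) * \<bar>q\<bar>"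
    using lam(1) lam(3)[OF i] B(2)[OF i] pq by (intro add_mono mult_mono order.trans[OF _ \<open>B \<le> _\<close>]) auto
  also have "\<dots> = E * \<bar>D i * q\<bar>"
    by (simp add: abs_mult algebra_simps)
  finally show "\<bar>x i * p + y i * q\<bar> \<le> E * \<bar>D i * q\<bar>"
    using abs_triangle_ineq[of "x i * p" "y i * q"] by (simp add: abs_mult)
qed

lemma exists_balanced_product:
  fixes ri rj :: real
  assumes "0 < rj" "rj \<le> 1" "1 \<le> ri"
  defines "R \<equiv> max ri (1 / rj)"
  shows "\<exists>p q. p + q = n \<and> 1 / R \<le> rj^q * ri^p \<and> rj^q * ri^p \<le> R"
proof -
  have R1: "1 \<le> R"
    using assms(3) max.cobounded1[of ri "1 / rj"] unfolding R_def by linarith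
  have "1 / rj \<le> R"
    unfolding R_def by simp
  then have "1 \<le> rj * R"
    using assms(1) by (simp add: divide_le_eq mult.commute)
  then have R: "1 / R \<le> rj" "ri \<le> R"
    using R1 by (simp_all add: divide_le_eq mult.commute R_def)
  show ?thesis
  proof (induction n)
    case 0
    show ?case
      using R1 by (intro exI[of _ 0]) (simp add: divide_le_eq_1_pos)
  next
    case (Suc n)
    obtain p q where pq: "p + q = n" "1 / R \<le> rj^q * ri^p" "rj^q * ri^p \<le> R"
      using Suc by blast
    define t where "t = rj^q * ri^p"
    have t: "0 < t" "1 / R \<le> t" "t \<le> R"
      using assms pq by (simp_all add: t_def)
    show ?case
    proof (cases "t \<ge> 1")
      case True
      have "1 / R \<le> t * rj"
        using R(1) mult_right_mono[OF True, of rj] assms(1) by linarith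
      moreover have "t * rj \<le> R"
        using t mult_left_mono[OF assms(2) less_imp_le[OF t(1)]] by linarith
      ultimately show ?thesis
        using pq(1) unfolding t_def by (intro exI[of _ p] exI[of _ "Suc q"]) (simp add: ac_simps)
    next
      case False
      have "1 / R \<le> t * ri"
        using t mult_left_mono[OF assms(3) less_imp_le[OF t(1)]] by linarith
      moreover have "t * ri \<le> R"
        using R(2) False assms(3) mult_right_mono[of t 1 ri] by linarith
      ultimately show ?thesis
        using pq(1) unfolding t_def by (intro exI[of _ "Suc p"] exI[of _ q]) (simp add: ac_simps)
    qed
  qed
qed

lemma exists_geometric_times_square_small:
  fixes t K C M :: real
  assumes "0 < t" "t < 1" "C > 0" "M > 0"
  shows "\<exists>n. C * t^n * (1 + real n * K)^2 * M < 1"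
proof -
  define r where "r = sqrt t"
  have r: "0 < r" "r < 1"
    using assms by (auto simp: r_def)
  have "(\<lambda>n. (r^n + K * (real n * r^n))^2) \<longlonglongrightarrow> (0 + K * 0)^2"
    using r powser_times_n_limit_0[of r] by (intro tendsto_intros LIMSEQ_power_zero) auto
  then have "(\<lambda>n. (r^n + K * (real n * r^n))^2) \<longlonglongrightarrow> 0"
    by simp
  moreover have "1 / (C * M) > 0"
    using assms by simp
  ultimately obtain n0 where "\<forall>n\<ge>n0. norm ((r^n + K * (real n * r^n))^2 - 0) < 1 / (C * M)"
    by (blast dest: LIMSEQ_D)
  then obtain n where n: "\<bar>(r^n + K * (real n * r^n))^2\<bar> < 1 / (C * M)"
    by auto
  have "t^n = (r^n)^2"
    using assms by (simp add: r_def power_mult[symmetric] mult.commute[of n] power_mult)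
  then have "t^n * (1 + real n * K)^2 = (r^n + K * (real n * r^n))^2"
    by (simp add: power2_eq_square algebra_simps)
  then have "C * M * (t^n * (1 + real n * K)^2) < 1"
    using n assms by (simp add: field_simps)
  then show ?thesis
    by (intro exI[of _ n]) (simp add: algebra_simps)
qed

locale reducible_tuple = contracting_tuple + unit_vector +
  assumes preserves_line_A: "\<And>i. i < N \<Longrightarrow> preserves_line (A i)"
begin

abbreviation "a i \<equiv> diag1 (A i)"
abbreviation "b i \<equiv> offdiag (A i)"
abbreviation "d i \<equiv> diag2 (A i)"

lemma preserves_line_Aw: "w \<in> all_words N \<Longrightarrow> preserves_line (Aw w)"
  by (induction w) (auto simp: preserves_line_mat1 preserves_line_A preserves_line_mult)

lemma diag_nonzero: "i < N \<Longrightarrow> a i \<noteq> 0 \<and> d i \<noteq> 0"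
  using preserves_line_det[OF preserves_line_A] det_nonzero by fastforce

lemma coeffs_Aw_append:
  assumes "w \<in> all_words N" "v \<in> all_words N"
  shows "diag1 (Aw (w @ v)) = diag1 (Aw w) * diag1 (Aw v)"
    and "diag2 (Aw (w @ v)) = diag2 (Aw w) * diag2 (Aw v)"
    and "offdiag (Aw (w @ v)) = diag1 (Aw w) * offdiag (Aw v) + offdiag (Aw w) * diag2 (Aw v)"
  using preserves_line_mult[OF preserves_line_Aw[OF assms(1)] preserves_line_Aw[OF assms(2)]]
  by (simp_all add: matprod_append)

lemma coeffs_Aw_Cons:
  assumes "i < N" "w \<in> all_words N"
  shows "diag1 (Aw (i # w)) = a i * diag1 (Aw w)" "diag2 (Aw (i # w)) = d i * diag2 (Aw w)"
    "offdiag (Aw (i # w)) = a i * offdiag (Aw w) + b i * diag2 (Aw w)"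
  using coeffs_Aw_append[of "[i]" w] assms by (simp_all add: all_words_def)

lemma coeffs_Aw_snoc:
  assumes "i < N" "w \<in> all_words N"
  shows "diag1 (Aw (w @ [i])) = diag1 (Aw w) * a i" "diag2 (Aw (w @ [i])) = diag2 (Aw w) * d i"
    "offdiag (Aw (w @ [i])) = d i * offdiag (Aw w) + b i * diag1 (Aw w)"
  using coeffs_Aw_append[of w "[i]"] assms by (simp_all add: all_words_def ac_simps)

lemma quasi_multiplicative_if_sv1_le_diag:
  assumes "f = diag1 \<or> f = diag2" and "K > 0"
    and sv1_le: "\<And>w. w \<in> all_words N \<Longrightarrow> sv1 (Aw w) \<le> K * \<bar>f (Aw w)\<bar>"
  shows sv1_quasi_multiplicative
proof -
  have "(1 / K^2) * sv1 (Aw w) * sv1 (Aw v) \<le> sv1 (Aw (w @ [] @ v))"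
    if w: "w \<in> all_words N" and v: "v \<in> all_words N" for w v
  proof -
    have "(1 / K^2) * sv1 (Aw w) * sv1 (Aw v) \<le> \<bar>f (Aw w)\<bar> * \<bar>f (Aw v)\<bar>"
      using mult_mono[OF sv1_le[OF w] sv1_le[OF v]] \<open>K > 0\<close>
      by (simp add: power2_eq_square field_simps sv1_nonneg)
    also have "\<dots> = \<bar>f (Aw (w @ v))\<bar>"
      using assms(1) coeffs_Aw_append[OF w v] by (auto simp: abs_mult)
    also have "\<dots> \<le> sv1 (Aw (w @ v))"
      using assms(1) abs_diag1_le_sv1 abs_diag2_le_sv1 by auto
    finally show ?thesis
      by simp
  qed
  then have "\<forall>w\<in>all_words N. \<forall>v\<in>all_words N. \<exists>l\<in>all_words N.
      length l \<le> 0 \<and> (1 / K^2) * sv1 (Aw w) * sv1 (Aw v) \<le> sv1 (Aw (w @ l @ v))"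
    by (auto simp: all_words_def)
  then show ?thesis
    unfolding sv1_quasi_multiplicative_def using \<open>K > 0\<close> by (intro exI[of _ 0] exI[of _ "1 / K^2"]) simp
qed

lemma sv1_le_diag2_if_dominant:
  assumes "\<And>i. i < N \<Longrightarrow> \<bar>a i\<bar> < \<bar>d i\<bar>"
  obtains K where "K > 0" "\<And>w. w \<in> all_words N \<Longrightarrow> sv1 (Aw w) \<le> K * \<bar>diag2 (Aw w)\<bar>"
proof -
  obtain E where E: "E \<ge> 0" and step: "\<And>i p q. i < N \<Longrightarrow> \<bar>p\<bar> \<le> E * \<bar>q\<bar> \<Longrightarrow>
      \<bar>a i * p + b i * q\<bar> \<le> E * \<bar>d i * q\<bar>"
    using dominant_diagonal_constant[of "{..<N}" a d b] assms by auto
  have "\<bar>diag1 (Aw w)\<bar> \<le> \<bar>diag2 (Aw w)\<bar> \<and> \<bar>offdiag (Aw w)\<bar> \<le> E * \<bar>diag2 (Aw w)\<bar>"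
    if "w \<in> all_words N" for w
    using that
  proof (induction w)
    case (Cons i w)
    then have i: "i < N" and w: "w \<in> all_words N"
      by auto
    have "\<bar>a i * diag1 (Aw w)\<bar> \<le> \<bar>d i * diag2 (Aw w)\<bar>"
      using assms[OF i] Cons.IH[OF w] by (simp add: abs_mult mult_mono)
    moreover have "\<bar>a i * offdiag (Aw w) + b i * diag2 (Aw w)\<bar> \<le> E * \<bar>d i * diag2 (Aw w)\<bar>"
      using step[OF i, of "offdiag (Aw w)" "diag2 (Aw w)"] Cons.IH[OF w] by (simp add: ac_simps)
    ultimately show ?case
      by (simp only: coeffs_Aw_Cons[OF i w])
  qed (simp add: preserves_line_mat1 E)
  then have "sv1 (Aw w) \<le> (2 + E) * \<bar>diag2 (Aw w)\<bar>" if "w \<in> all_words N" for w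
    using preserves_line_sv1_le[OF preserves_line_Aw[OF that]] that by (fastforce simp: algebra_simps)
  then show ?thesis
    using E by (intro that[of "2 + E"]) auto
qed

lemma sv1_le_diag1_if_dominant:
  assumes "\<And>i. i < N \<Longrightarrow> \<bar>d i\<bar> < \<bar>a i\<bar>"
  obtains K where "K > 0" "\<And>w. w \<in> all_words N \<Longrightarrow> sv1 (Aw w) \<le> K * \<bar>diag1 (Aw w)\<bar>"
proof -
  obtain E where E: "E \<ge> 0" and step: "\<And>i p q. i < N \<Longrightarrow> \<bar>p\<bar> \<le> E * \<bar>q\<bar> \<Longrightarrow>
      \<bar>d i * p + b i * q\<bar> \<le> E * \<bar>a i * q\<bar>"
    using dominant_diagonal_constant[of "{..<N}" d a b] assms by auto
  have "\<bar>diag2 (Aw w)\<bar> \<le> \<bar>diag1 (Aw w)\<bar> \<and> \<bar>offdiag (Aw w)\<bar> \<le> E * \<bar>diag1 (Aw w)\<bar>"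
    if "w \<in> all_words N" for w
    using that
  proof (induction w rule: rev_induct)
    case (snoc i w)
    then have i: "i < N" and w: "w \<in> all_words N"
      by auto
    have "\<bar>diag2 (Aw w) * d i\<bar> \<le> \<bar>diag1 (Aw w) * a i\<bar>"
      using assms[OF i] snoc.IH[OF w] by (simp add: abs_mult mult_mono)
    moreover have "\<bar>d i * offdiag (Aw w) + b i * diag1 (Aw w)\<bar> \<le> E * \<bar>diag1 (Aw w) * a i\<bar>"
      using step[OF i, of "offdiag (Aw w)" "diag1 (Aw w)"] snoc.IH[OF w] by (simp add: ac_simps)
    ultimately show ?case
      by (simp only: coeffs_Aw_snoc[OF i w])
  qed (simp add: preserves_line_mat1 E)
  then have "sv1 (Aw w) \<le> (2 + E) * \<bar>diag1 (Aw w)\<bar>" if "w \<in> all_words N" for w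
    using preserves_line_sv1_le[OF preserves_line_Aw[OF that]] that by (fastforce simp: algebra_simps)
  then show ?thesis
    using E by (intro that[of "2 + E"]) auto
qed

end

context reducible_tuple
begin

lemma diag_Aw_replicate:
  assumes "i < N"
  shows "diag1 (Aw (replicate p i)) = a i ^ p" "diag2 (Aw (replicate p i)) = d i ^ p"
proof -
  have "diag1 (Aw (replicate p i)) = a i ^ p \<and> diag2 (Aw (replicate p i)) = d i ^ p"
  proof (induction p)
    case (Suc p)
    then show ?case
      using coeffs_Aw_Cons(1,2)[OF assms replicate_in_all_words[OF assms, of p]] by simp
  qed (simp add: preserves_line_mat1)
  then show "diag1 (Aw (replicate p i)) = a i ^ p" "diag2 (Aw (replicate p i)) = d i ^ p"
    by auto
qed

lemma offdiag_Aw_replicate_le: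
  assumes i: "i < N"
  defines "m \<equiv> max \<bar>a i\<bar> \<bar>d i\<bar>"
  shows "m * \<bar>offdiag (Aw (replicate p i))\<bar> \<le> real p * \<bar>b i\<bar> * m ^ p"
proof (induction p)
  case 0
  then show ?case
    by (simp add: preserves_line_mat1)
next
  case (Suc p)
  have m: "\<bar>a i\<bar> \<le> m" "\<bar>d i\<bar> \<le> m" "0 \<le> m"
    by (auto simp: m_def)
  have "m * \<bar>offdiag (Aw (replicate (Suc p) i))\<bar> = m * \<bar>a i * offdiag (Aw (replicate p i)) + b i * d i ^ p\<bar>"
    using coeffs_Aw_Cons(3)[OF i replicate_in_all_words[OF i, of p]] diag_Aw_replicate[OF i, of p] by simp
  also have "\<dots> \<le> m * (\<bar>a i\<bar> * \<bar>offdiag (Aw (replicate p i))\<bar> + \<bar>b i\<bar> * \<bar>d i\<bar> ^ p)"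
    using m(3) abs_triangle_ineq[of "a i * offdiag (Aw (replicate p i))" "b i * d i ^ p"]
    by (intro mult_left_mono) (simp_all add: abs_mult power_abs)
  also have "\<dots> = \<bar>a i\<bar> * (m * \<bar>offdiag (Aw (replicate p i))\<bar>) + m * (\<bar>b i\<bar> * \<bar>d i\<bar> ^ p)"
    by (simp add: algebra_simps)
  also have "\<dots> \<le> m * (real p * \<bar>b i\<bar> * m ^ p) + m * (\<bar>b i\<bar> * m ^ p)"
  proof (rule add_mono)
    show "\<bar>a i\<bar> * (m * \<bar>offdiag (Aw (replicate p i))\<bar>) \<le> m * (real p * \<bar>b i\<bar> * m ^ p)"
      using m(3) by (intro mult_mono[OF m(1) Suc m(3)]) simp
    show "m * (\<bar>b i\<bar> * \<bar>d i\<bar> ^ p) \<le> m * (\<bar>b i\<bar> * m ^ p)"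
      using m by (intro mult_left_mono power_mono) auto
  qed
  also have "\<dots> = real (Suc p) * \<bar>b i\<bar> * m ^ Suc p"
    by (simp add: algebra_simps)
  finally show ?case .
qed

lemma offdiag_mixed_word_le:
  fixes p q :: nat
  assumes i: "i < N" "\<bar>d i\<bar> \<le> \<bar>a i\<bar>" and j: "j < N" "\<bar>a j\<bar> \<le> \<bar>d j\<bar>"
  defines "K \<equiv> max (\<bar>b i\<bar> / \<bar>a i\<bar>) (\<bar>b j\<bar> / \<bar>d j\<bar>)"
    and "W \<equiv> Aw (replicate q j @ replicate p i)"
  shows "\<bar>offdiag W\<bar> \<le> real (p + q) * K * (\<bar>diag1 W\<bar> + \<bar>diag2 W\<bar>)"
proof -
  define X where "X = Aw (replicate q j)"
  define Y where "Y = Aw (replicate p i)"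
  have ai: "\<bar>a i\<bar> > 0" and dj: "\<bar>d j\<bar> > 0"
    using diag_nonzero i j by auto
  have K0: "K \<ge> 0"
    by (simp add: K_def le_max_iff_disj)
  have words: "replicate q j \<in> all_words N" "replicate p i \<in> all_words N"
    using i j by (simp_all add: replicate_in_all_words)
  have "\<bar>a i\<bar> * \<bar>offdiag Y\<bar> \<le> real p * \<bar>b i\<bar> * \<bar>a i\<bar> ^ p"
    using offdiag_Aw_replicate_le[OF i(1), of p] i(2) by (simp add: Y_def max_absorb1)
  then have "\<bar>offdiag Y\<bar> \<le> real p * (\<bar>b i\<bar> / \<bar>a i\<bar>) * \<bar>a i\<bar> ^ p"
    using ai by (simp add: field_simps)
  also have "\<dots> \<le> real p * K * \<bar>a i\<bar> ^ p"
    by (intro mult_right_mono mult_left_mono) (auto simp: K_def)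
  finally have Y: "\<bar>offdiag Y\<bar> \<le> real p * K * \<bar>a i\<bar> ^ p" .
  have "\<bar>d j\<bar> * \<bar>offdiag X\<bar> \<le> real q * \<bar>b j\<bar> * \<bar>d j\<bar> ^ q"
    using offdiag_Aw_replicate_le[OF j(1), of q] j(2) by (simp add: X_def max_absorb2)
  then have "\<bar>offdiag X\<bar> \<le> real q * (\<bar>b j\<bar> / \<bar>d j\<bar>) * \<bar>d j\<bar> ^ q"
    using dj by (simp add: field_simps)
  also have "\<dots> \<le> real q * K * \<bar>d j\<bar> ^ q"
    by (intro mult_right_mono mult_left_mono) (auto simp: K_def)
  finally have X: "\<bar>offdiag X\<bar> \<le> real q * K * \<bar>d j\<bar> ^ q" .
  have "\<bar>offdiag W\<bar> = \<bar>a j ^ q * offdiag Y + offdiag X * d i ^ p\<bar>"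
    using coeffs_Aw_append(3)[OF words] diag_Aw_replicate i j by (simp add: W_def X_def Y_def)
  also have "\<dots> \<le> \<bar>a j\<bar> ^ q * \<bar>offdiag Y\<bar> + \<bar>offdiag X\<bar> * \<bar>d i\<bar> ^ p"
    by (rule order.trans[OF abs_triangle_ineq]) (simp add: abs_mult power_abs)
  also have "\<dots> \<le> \<bar>a j\<bar> ^ q * (real p * K * \<bar>a i\<bar> ^ p) + (real q * K * \<bar>d j\<bar> ^ q) * \<bar>d i\<bar> ^ p"
    using X Y by (intro add_mono mult_left_mono mult_right_mono) auto
  also have "\<dots> = real p * K * \<bar>diag1 W\<bar> + real q * K * \<bar>diag2 W\<bar>"
    using coeffs_Aw_append(1,2)[OF words] diag_Aw_replicate i j
    by (simp add: W_def abs_mult power_abs)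
  also have "\<dots> \<le> real (p + q) * K * (\<bar>diag1 W\<bar> + \<bar>diag2 W\<bar>)"
    using K0 by (simp add: algebra_simps add_mono mult_right_mono)
  finally show ?thesis .
qed

text \<open>If one generator has dominant first and another dominant second diagonal entry, products
  balancing the two keep both diagonal entries comparable, so their singular values cannot
  separate exponentially.\<close>

lemma mixed_diagonals_not_dominated:
  assumes i: "i < N" "\<bar>d i\<bar> \<le> \<bar>a i\<bar>" and j: "j < N" "\<bar>a j\<bar> \<le> \<bar>d j\<bar>"
  shows "\<not> dominated N A"
proof
  assume "dominated N A"
  then obtain C \<tau> where C: "C > 0" and \<tau>: "0 < \<tau>" "\<tau> < 1"
    and dom: "\<And>w. w \<in> all_words N \<Longrightarrow> sv2 (Aw w) \<le> C * \<tau> ^ length w * sv1 (Aw w)"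
    unfolding dominated_def by blast
  have ai: "\<bar>a i\<bar> > 0" "\<bar>d i\<bar> > 0" and aj: "\<bar>a j\<bar> > 0" "\<bar>d j\<bar> > 0"
    using diag_nonzero i j by auto
  define ri where "ri = \<bar>a i\<bar> / \<bar>d i\<bar>"
  define rj where "rj = \<bar>a j\<bar> / \<bar>d j\<bar>"
  have ri: "1 \<le> ri" and rj: "0 < rj" "rj \<le> 1"
    using i j ai aj by (auto simp: ri_def rj_def)
  define R where "R = max ri (1 / rj)"
  have R1: "1 \<le> R"
    using ri by (simp add: R_def)
  define K where "K = max (\<bar>b i\<bar> / \<bar>a i\<bar>) (\<bar>b j\<bar> / \<bar>d j\<bar>)"
  have K0: "K \<ge> 0"
    by (simp add: K_def le_max_iff_disj)
  obtain n where n: "C * \<tau>^n * (1 + real n * K)^2 * ((R + 1)^2 * R) < 1"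
    using exists_geometric_times_square_small[OF \<tau> C, of "(R + 1)^2 * R"] R1 by auto
  obtain p q where pq: "p + q = n" "1 / R \<le> rj^q * ri^p" "rj^q * ri^p \<le> R"
    using exists_balanced_product[OF rj ri, of n] unfolding R_def by blast
  define w where "w = replicate q j @ replicate p i"
  have w: "w \<in> all_words N" "length w = n"
    using i j pq(1) by (auto simp: w_def replicate_in_all_words)
  define t where "t = rj^q * ri^p"
  have "\<bar>diag1 (Aw w)\<bar> = t * \<bar>diag2 (Aw w)\<bar>"
    using coeffs_Aw_append(1,2) diag_Aw_replicate i j ai aj
    by (simp add: w_def t_def ri_def rj_def replicate_in_all_words abs_mult power_abs
        power_divide field_simps)
  moreover have "\<bar>offdiag (Aw w)\<bar> \<le> (real n * K) * (\<bar>diag1 (Aw w)\<bar> + \<bar>diag2 (Aw w)\<bar>)"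
    using offdiag_mixed_word_le[OF i j, of q p] pq(1) by (simp add: w_def K_def)
  ultimately have "t \<le> ((1 + real n * K) * (t + 1))^2 * (sv2 (Aw w) / sv1 (Aw w))"
    using K0 by (intro comparable_diagonals_sv_ratio preserves_line_Aw w(1) det_Aw(1)) auto
  also have "\<dots> \<le> ((1 + real n * K) * (t + 1))^2 * (C * \<tau>^n)"
    using dom[OF w(1)] w(2) sv_pos(1)[OF det_Aw(1)[OF w(1)]] by (intro mult_left_mono) (auto simp: divide_le_eq)
  also have "\<dots> \<le> ((1 + real n * K) * (R + 1))^2 * (C * \<tau>^n)"
    using pq(3) C \<tau> rj ri K0 by (intro mult_right_mono power_mono mult_left_mono) (auto simp: t_def)
  also have "\<dots> = C * \<tau>^n * (1 + real n * K)^2 * (R + 1)^2"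
    by (simp add: power_mult_distrib)
  finally have "R * t \<le> R * (C * \<tau>^n * (1 + real n * K)^2 * (R + 1)^2)"
    using R1 by (simp add: mult_left_mono)
  then have "R * t \<le> C * \<tau>^n * (1 + real n * K)^2 * ((R + 1)^2 * R)"
    by (simp add: ac_simps)
  moreover have "1 \<le> R * t"
    using pq(2) R1 by (simp add: t_def field_simps)
  ultimately show False
    using n by simp
qed

end

context contracting_tuple
begin

lemma reducible_dominated_quasi_multiplicative:
  assumes dom: "dominated N A" and red: "\<not> irreducible_tuple N A"
  shows sv1_quasi_multiplicative
proof -
  obtain L :: "(real^2) set" where L: "subspace L" "dim L = 1" "\<forall>i<N. (\<lambda>x. A i *v x) ` L \<subseteq> L"
    using red unfolding irreducible_tuple_def by blast
  then obtain x where x: "x \<in> L" "x \<noteq> 0"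
    using dim_eq_0[of L] by auto
  define u where "u = (1 / norm x) *\<^sub>R x"
  have u: "u \<in> L" "norm u = 1"
    using subspace_scale[OF L(1) x(1)] x(2) by (auto simp: u_def)
  interpret unit_vector u
    using u(2) by unfold_locales
  have "span {u} = L"
    using u L(1,2) by (intro subspace_dim_equal[OF subspace_span L(1)]) (auto simp: span_minimal)
  then have "preserves_line (A i)" if "i < N" for i
    using L(3) u(1) that inner_u_perp
    by (fastforce simp: preserves_line_def span_singleton)
  then interpret reducible_tuple N A u
    by unfold_locales
  consider "\<And>i. i < N \<Longrightarrow> \<bar>a i\<bar> < \<bar>d i\<bar>" | "\<And>i. i < N \<Longrightarrow> \<bar>d i\<bar> < \<bar>a i\<bar>"
    | i j where "i < N" "\<bar>d i\<bar> \<le> \<bar>a i\<bar>" "j < N" "\<bar>a j\<bar> \<le> \<bar>d j\<bar>"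
    by (meson not_less)
  then show ?thesis
  proof cases
    case 1
    then obtain K where "K > 0" "\<And>w. w \<in> all_words N \<Longrightarrow> sv1 (Aw w) \<le> K * \<bar>diag2 (Aw w)\<bar>"
      using sv1_le_diag2_if_dominant by blast
    then show ?thesis
      by (intro quasi_multiplicative_if_sv1_le_diag[of diag2 K]) auto
  next
    case 2
    then obtain K where "K > 0" "\<And>w. w \<in> all_words N \<Longrightarrow> sv1 (Aw w) \<le> K * \<bar>diag1 (Aw w)\<bar>"
      using sv1_le_diag1_if_dominant by blast
    then show ?thesis
      by (intro quasi_multiplicative_if_sv1_le_diag[of diag1 K]) auto
  next
    case 3
    then show ?thesis
      using mixed_diagonals_not_dominated dom by blast
  qed
qed

lemma quasi_multiplicative_if_dominated_or_irreducible:
  "dominated N A \<or> irreducible_tuple N A \<Longrightarrow> sv1_quasi_multiplicative"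
  using irreducible_quasi_multiplicative reducible_dominated_quasi_multiplicative by blast

end

section \<open>Covering affine images of a ball\<close>

lemma diam_pow_nonneg: "diam_pow s U \<ge> 0"
  by (simp add: diam_pow_def)

lemma diam_pow_le:
  assumes "bounded U" "diameter U \<le> D" "D > 0" "s \<ge> 0"
  shows "diam_pow s U \<le> D powr s"
  using assms diameter_ge_0[OF assms(1)] by (auto simp: diam_pow_def powr_mono2)

lemma exists_subinterval_index:
  fixes a h z :: real and K :: nat
  assumes h: "h > 0" and K: "K \<ge> 1" and z: "a \<le> z" "z \<le> a + real K * h"
  shows "\<exists>k<K. a + real k * h \<le> z \<and> z \<le> a + real (Suc k) * h"
proof -
  define r where "r = (z - a) / h"
  define k where "k = min (K - 1) (nat \<lfloor>r\<rfloor>)"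
  have r: "0 \<le> r" "r \<le> real K" "z = a + r * h"
    using z h by (auto simp: r_def field_simps)
  have "real (nat \<lfloor>r\<rfloor>) \<le> r" "r < real (nat \<lfloor>r\<rfloor>) + 1"
    using r(1) by linarith+
  then have k: "k < K" "real k \<le> r" "r \<le> real k + 1"
    using r(2) K by (auto simp: k_def min_def of_nat_diff)
  then have "real k * h \<le> r * h" "r * h \<le> (real k + 1) * h"
    using h by (simp_all add: mult_right_mono)
  then show ?thesis
    using k(1) unfolding r(3) by (intro exI[of _ k]) (simp add: distrib_right)
qed

context unit_vector
begin

lemma norm_le_of_components_le:
  assumes "\<bar>u \<bullet> x\<bar> \<le> 2 * h" "\<bar>u' \<bullet> x\<bar> \<le> 2 * h" "h \<ge> 0"
  shows "norm x \<le> 3 * h"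
proof -
  have sq: "t^2 \<le> (2 * h)^2" if "\<bar>t\<bar> \<le> 2 * h" for t :: real
    using that abs_le_square_iff[of t "2 * h"] assms(3) by simp
  have "(norm x)^2 \<le> (2 * h)^2 + (2 * h)^2"
    unfolding norm_sq_orthonormal[of x] using assms(1,2) by (intro add_mono sq)
  also have "\<dots> \<le> (3 * h)^2"
    by (simp add: power2_eq_square)
  finally show ?thesis
    using assms(3) by (auto intro: power2_le_imp_le)
qed

lemma rectangle_strip_cover:
  assumes S: "bounded S" "\<And>y. y \<in> S \<Longrightarrow> \<bar>u \<bullet> (y - c)\<bar> \<le> l \<and> \<bar>u' \<bullet> (y - c)\<bar> \<le> h"
    and h: "0 < h" "h \<le> l"
  obtains F where "finite F" "S \<subseteq> \<Union>F" "\<And>U. U \<in> F \<Longrightarrow> bounded U \<and> diameter U \<le> 3 * h"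
    "real (card F) \<le> 2 * l / h"
proof
  define K where "K = nat \<lceil>l / h\<rceil>"
  have q: "1 \<le> l / h"
    using h by simp
  have "l / h \<le> real_of_int \<lceil>l / h\<rceil>"
    by (rule le_of_int_ceiling)
  moreover have "real_of_int \<lceil>l / h\<rceil> \<le> l / h + 1"
    by (rule of_int_ceiling_le_add_one)
  ultimately have K: "real K \<ge> l / h" "real K \<le> 2 * (l / h)" "K \<ge> 1"
    using q unfolding K_def by linarith+
  define Q where "Q k = {y \<in> S. - l + real k * (2 * h) \<le> u \<bullet> (y - c) \<and> u \<bullet> (y - c) \<le> - l + real (Suc k) * (2 * h)}" for k
  define F where "F = Q ` {..<K}"
  show "finite F"
    by (simp add: F_def)
  show "real (card F) \<le> 2 * l / h"
  proof -
    have "card F \<le> K"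
      using card_image_le[of "{..<K}" Q] by (simp add: F_def)
    then show ?thesis
      using K(2) by simp
  qed
  show "S \<subseteq> \<Union>F"
  proof
    fix y assume y: "y \<in> S"
    have "l \<le> real K * h"
      using K(1) h by (simp add: divide_le_eq)
    then have "- l \<le> u \<bullet> (y - c)" "u \<bullet> (y - c) \<le> - l + real K * (2 * h)"
      using S(2)[OF y] by (auto simp: abs_le_iff)
    then obtain k where "k < K" "- l + real k * (2 * h) \<le> u \<bullet> (y - c)"
      "u \<bullet> (y - c) \<le> - l + real (Suc k) * (2 * h)"
      using exists_subinterval_index[of "2 * h" K "- l"] h K(3) by auto
    then show "y \<in> \<Union>F"
      using y by (auto simp: F_def Q_def)
  qed
  fix U assume "U \<in> F"
  then obtain k where U: "U = Q k"
    by (auto simp: F_def)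
  have "norm (y - y') \<le> 3 * h" if "y \<in> Q k" "y' \<in> Q k" for y y'
  proof (rule norm_le_of_components_le)
    show "\<bar>u \<bullet> (y - y')\<bar> \<le> 2 * h" "\<bar>u' \<bullet> (y - y')\<bar> \<le> 2 * h"
      using that S(2)[of y] S(2)[of y'] inner_diff_right[of u "y - c" "y' - c"]
        inner_diff_right[of u' "y - c" "y' - c"]
      by (auto simp: Q_def abs_le_iff algebra_simps)
  qed (use h in simp)
  then show "bounded U \<and> diameter U \<le> 3 * h"
    using h bounded_subset[OF S(1), of U] unfolding U by (auto simp: Q_def intro!: diameter_le)
qed

end

lemma ellipse_in_rectangle:
  fixes M :: mat2
  assumes "det M \<noteq> 0" and e: "norm e = 1" "norm (M *v e) = sv1 M"
  defines "w \<equiv> (1 / sv1 M) *\<^sub>R (M *v e)"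
  shows "norm w = 1" and "\<bar>w \<bullet> (M *v x)\<bar> \<le> sv1 M * norm x"
    and "\<bar>perp w \<bullet> (M *v x)\<bar> \<le> sv2 M * norm x"
proof -
  have p1: "sv1 M > 0"
    using sv_pos[OF assms(1)] by simp
  show nw: "norm w = 1"
    using e p1 by (simp add: w_def)
  show "\<bar>w \<bullet> (M *v x)\<bar> \<le> sv1 M * norm x"
    using Cauchy_Schwarz_ineq2[of w "M *v x"] norm_mult_vec_le_sv1[of M x] nw by simp
  interpret unit_vector e
    using e(1) by unfold_locales
  have "perp w \<bullet> (M *v x) = (perp e \<bullet> x) * (det M / sv1 M)"
    unfolding w_def perp_scaleR
    by (subst orthonormal_expansion[of x])
       (simp add: matrix_vector_right_distrib matrix_vector_mult_scaleR inner_add_right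
        inner_mult_vec_perp[OF e(1)] inner_perp_self inner_commute)
  then have "\<bar>perp w \<bullet> (M *v x)\<bar> = \<bar>perp e \<bullet> x\<bar> * sv2 M"
    using sv2_eq_det_div_sv1[OF assms(1)] p1 by (simp add: abs_mult)
  also have "\<dots> \<le> norm x * sv2 M"
    using Cauchy_Schwarz_ineq2[of "perp e" x] norm_perp_u by (simp add: mult_right_mono sv2_nonneg)
  finally show "\<bar>perp w \<bullet> (M *v x)\<bar> \<le> sv2 M * norm x"
    by (simp add: mult.commute)
qed

lemma bounded_affine_image_ball: "bounded ((\<lambda>x. M *v x + c) ` cball 0 R)" for M :: mat2
  by (intro compact_imp_bounded compact_continuous_image continuous_intros) auto

lemma diameter_affine_image_ball_le:
  assumes "R > 0"
  shows "diameter ((\<lambda>x. M *v x + c) ` cball 0 R) \<le> 2 * R * sv1 M"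
proof (rule diameter_le)
  fix y y' assume "y \<in> (\<lambda>x. M *v x + c) ` cball 0 R" "y' \<in> (\<lambda>x. M *v x + c) ` cball 0 R"
  then obtain x x' where x: "norm x \<le> R" "norm x' \<le> R" "y = M *v x + c" "y' = M *v x' + c"
    by auto
  have "norm (y - y') \<le> sv1 M * norm (x - x')"
    using norm_mult_vec_le_sv1[of M "x - x'"] x(3,4) by (simp add: matrix_vector_mult_diff_distrib)
  also have "\<dots> \<le> sv1 M * (2 * R)"
    using norm_triangle_ineq4[of x x'] x(1,2) sv1_nonneg[of M] by (intro mult_left_mono) auto
  finally show "norm (y - y') \<le> 2 * R * sv1 M"
    by (simp add: algebra_simps)
qed (use assms sv1_nonneg[of M] in auto)

text \<open>For s > 1 the ellipse is cut into about sv1 M / sv2 M strips of width comparable to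
  sv2 M.\<close>

lemma affine_image_ball_cover_gt1:
  fixes M :: mat2
  assumes d: "det M \<noteq> 0" and R: "R > 0" and s: "s > 1"
  shows "\<exists>F. finite F \<and> (\<lambda>x. M *v x + c) ` cball 0 R \<subseteq> \<Union>F
    \<and> (\<forall>U\<in>F. bounded U \<and> diameter U \<le> 3 * R * sv1 M)
    \<and> (\<Sum>U\<in>F. diam_pow s U) \<le> 2 * (3 * R) powr s * svf s M"
proof -
  define S where "S = (\<lambda>x. M *v x + c) ` cball 0 R"
  have p1: "sv1 M > 0" and p2: "sv2 M > 0"
    using sv_pos[OF d] by auto
  obtain e :: "real^2" where e: "norm e = 1" "norm (M *v e) = sv1 M"
    using sv1_attained by blast
  define w where "w = (1 / sv1 M) *\<^sub>R (M *v e)"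
  interpret unit_vector w
    by unfold_locales (unfold w_def, rule ellipse_in_rectangle(1)[OF d e])
  have "\<bar>w \<bullet> (y - c)\<bar> \<le> sv1 M * R \<and> \<bar>u' \<bullet> (y - c)\<bar> \<le> sv2 M * R" if "y \<in> S" for y
  proof -
    obtain x where x: "norm x \<le> R" "y - c = M *v x"
      using \<open>y \<in> S\<close> by (auto simp: S_def)
    have "sv1 M * norm x \<le> sv1 M * R" "sv2 M * norm x \<le> sv2 M * R"
      using x p1 p2 by (simp_all add: mult_left_mono)
    then show ?thesis
      using ellipse_in_rectangle(2,3)[OF d e, of x] unfolding x(2) w_def by linarith
  qed
  then obtain F where F: "finite F" "S \<subseteq> \<Union>F" "\<And>U. U \<in> F \<Longrightarrow> bounded U \<and> diameter U \<le> 3 * (sv2 M * R)"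
    "real (card F) \<le> 2 * (sv1 M * R) / (sv2 M * R)"
    using rectangle_strip_cover[OF bounded_affine_image_ball[of M c R, folded S_def], of c "sv1 M * R" "sv2 M * R"]
      R p2 sv2_le_sv1[of M]
    by (auto intro: mult_right_mono)
  have "(\<Sum>U\<in>F. diam_pow s U) \<le> (\<Sum>U\<in>F. (3 * (sv2 M * R)) powr s)"
    using F(3) R p2 s by (intro sum_mono diam_pow_le) auto
  also have "\<dots> = real (card F) * (3 * (sv2 M * R)) powr s"
    by simp
  also have "\<dots> \<le> 2 * (sv1 M / sv2 M) * (3 * (sv2 M * R)) powr s"
    using F(4) R p2 by (intro mult_right_mono) simp_all
  also have "\<dots> = 2 * (3 * R) powr s * (sv1 M * sv2 M powr (s - 1))"
    using R p2 by (simp add: powr_mult powr_diff field_simps)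
  also have "\<dots> \<le> 2 * (3 * R) powr s * svf s M"
    using sv1_mult_sv2_powr_le_svf[OF d s] by (intro mult_left_mono) auto
  finally have "(\<Sum>U\<in>F. diam_pow s U) \<le> 2 * (3 * R) powr s * svf s M" .
  moreover have "3 * (sv2 M * R) \<le> 3 * R * sv1 M"
    using R sv2_le_sv1[of M] by (simp add: mult_left_mono mult.commute)
  then have "bounded U \<and> diameter U \<le> 3 * R * sv1 M" if "U \<in> F" for U
    using F(3)[OF that] by linarith
  ultimately show ?thesis
    using F(1,2) by (intro exI[of _ F]) (auto simp: S_def)
qed

lemma affine_image_ball_cover:
  fixes M :: mat2
  assumes d: "det M \<noteq> 0" and R: "R > 0" and s: "s \<ge> 0"
  shows "\<exists>F. finite F \<and> (\<lambda>x. M *v x + c) ` cball 0 R \<subseteq> \<Union>F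
    \<and> (\<forall>U\<in>F. bounded U \<and> diameter U \<le> 3 * R * sv1 M)
    \<and> (\<Sum>U\<in>F. diam_pow s U) \<le> (2 * (3 * R) powr s + (2 * R) powr s) * svf s M"
proof (cases "s \<le> 1")
  case True
  define S where "S = (\<lambda>x. M *v x + c) ` cball 0 R"
  have p1: "sv1 M > 0"
    using sv_pos[OF d] by auto
  have dS: "diameter S \<le> 2 * R * sv1 M"
    unfolding S_def by (rule diameter_affine_image_ball_le[OF R])
  have "diam_pow s S \<le> (2 * R * sv1 M) powr s"
    using R p1 s by (intro diam_pow_le[OF _ dS]) (auto simp: S_def bounded_affine_image_ball)
  also have "\<dots> = (2 * R) powr s * svf s M"
    using True R p1 by (simp add: svf_def powr_mult)
  also have "\<dots> \<le> (2 * (3 * R) powr s + (2 * R) powr s) * svf s M"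
    using svf_pos[OF d, of s] by (intro mult_right_mono) auto
  moreover have "diameter S \<le> 3 * R * sv1 M"
    using dS mult_right_mono[of "2 * R" "3 * R" "sv1 M"] R p1 by linarith
  ultimately show ?thesis
    by (intro exI[of _ "{S}"]) (auto simp: S_def bounded_affine_image_ball)
next
  case False
  then obtain F where "finite F" "(\<lambda>x. M *v x + c) ` cball 0 R \<subseteq> \<Union>F"
    "\<forall>U\<in>F. bounded U \<and> diameter U \<le> 3 * R * sv1 M"
    "(\<Sum>U\<in>F. diam_pow s U) \<le> 2 * (3 * R) powr s * svf s M"
    using affine_image_ball_cover_gt1[OF d R, of s c] by auto
  moreover have "2 * (3 * R) powr s * svf s M \<le> (2 * (3 * R) powr s + (2 * R) powr s) * svf s M"
    using svf_pos[OF d, of s] by (intro mult_right_mono) auto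
  ultimately show ?thesis
    by (intro exI[of _ F]) auto
qed

lemma hausdorff_content_le_finite_cover:
  fixes E :: "'a::metric_space set"
  assumes "finite F" "E \<subseteq> \<Union>F" "\<And>U. U \<in> F \<Longrightarrow> bounded U \<and> diameter U \<le> \<delta>" "\<delta> \<ge> 0"
  shows "hausdorff_content s \<delta> E \<le> ennreal (\<Sum>U\<in>F. diam_pow s U)"
proof -
  obtain us where us: "set us = F" "distinct us"
    using finite_distinct_list[OF assms(1)] by blast
  define U where "U n = (if n < length us then us ! n else {})" for n
  have "E \<subseteq> (\<Union>n. U n)"
  proof
    fix x assume "x \<in> E"
    then obtain V where "V \<in> F" "x \<in> V"
      using assms(2) by blast
    then obtain n where "n < length us" "us ! n = V"
      using us(1) by (metis in_set_conv_nth)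
    then show "x \<in> (\<Union>n. U n)"
      using \<open>x \<in> V\<close> by (auto simp: U_def)
  qed
  moreover have "bounded (U n) \<and> diameter (U n) \<le> \<delta>" for n
    using assms(3,4) us(1) by (auto simp: U_def)
  moreover have "(\<Sum>n. ennreal (diam_pow s (U n))) = ennreal (\<Sum>U\<in>F. diam_pow s U)"
  proof -
    have "(\<Sum>n. ennreal (diam_pow s (U n))) = (\<Sum>n<length us. ennreal (diam_pow s (U n)))"
      by (rule suminf_finite) (auto simp: U_def diam_pow_def)
    also have "\<dots> = ennreal (\<Sum>n<length us. diam_pow s (us ! n))"
      by (simp add: U_def diam_pow_nonneg)
    also have "(\<Sum>n<length us. diam_pow s (us ! n)) = (\<Sum>U\<in>F. diam_pow s U)"
      using sum.distinct_set_conv_list[OF us(2), of "diam_pow s"] us(1)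
      by (simp add: sum_list_sum_nth atLeast0LessThan)
    finally show ?thesis .
  qed
  ultimately show ?thesis
    unfolding hausdorff_content_def by (intro INF_lower2[of U]) auto
qed

fun word_translation :: "(nat \<Rightarrow> mat2) \<Rightarrow> (nat \<Rightarrow> real^2) \<Rightarrow> nat list \<Rightarrow> real^2" where
  "word_translation A v [] = 0"
| "word_translation A v (i # w) = A i *v word_translation A v w + v i"

lemma self_affine_subset_word_images:
  assumes "X = (\<Union>i<N. (\<lambda>x. A i *v x + v i) ` X)"
  shows "X \<subseteq> (\<Union>w\<in>words N n. (\<lambda>x. matprod A w *v x + word_translation A v w) ` X)"
proof (induction n)
  case (Suc n)
  show ?case
  proof
    fix y assume "y \<in> X"
    then obtain i x where i: "i < N" and "x \<in> X" and y: "y = A i *v x + v i"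
      using assms by blast
    then obtain w x' where w: "w \<in> words N n" and x': "x' \<in> X"
      and x: "x = matprod A w *v x' + word_translation A v w"
      using Suc by blast
    have "y = matprod A (i # w) *v x' + word_translation A v (i # w)"
      by (simp add: y x matrix_vector_right_distrib matrix_vector_mul_assoc add.assoc)
    moreover have "i # w \<in> words N (Suc n)"
      using i w by (auto simp: words_def)
    ultimately show "y \<in> (\<Union>w\<in>words N (Suc n). (\<lambda>x. matprod A w *v x + word_translation A v w) ` X)"
      using x' by blast
  qed
qed (simp add: words_0)

context contracting_tuple
begin

lemma cylinder_cover:
  assumes X: "X \<subseteq> cball 0 R" and R: "R > 0" and s: "s \<ge> 0" and w: "w \<in> all_words N"
    and small: "3 * R * max_sv1 ^ length w < \<delta>"
  shows "\<exists>F. finite F \<and> (\<lambda>x. Aw w *v x + c) ` X \<subseteq> \<Union>F \<and> (\<forall>U\<in>F. bounded U \<and> diameter U \<le> \<delta>)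
    \<and> (\<Sum>U\<in>F. diam_pow s U) \<le> (2 * (3 * R) powr s + (2 * R) powr s) * svf s (Aw w)"
proof -
  obtain F where F: "finite F" "(\<lambda>x. Aw w *v x + c) ` cball 0 R \<subseteq> \<Union>F"
    "\<forall>U\<in>F. bounded U \<and> diameter U \<le> 3 * R * sv1 (Aw w)"
    "(\<Sum>U\<in>F. diam_pow s U) \<le> (2 * (3 * R) powr s + (2 * R) powr s) * svf s (Aw w)"
    using affine_image_ball_cover[OF det_Aw(1)[OF w] R s, of c] by blast
  have "3 * R * sv1 (Aw w) \<le> 3 * R * max_sv1 ^ length w"
    using sv1_Aw_le[OF w] R by (intro mult_left_mono) auto
  then have "\<forall>U\<in>F. bounded U \<and> diameter U \<le> \<delta>"
    using F(3) small by fastforce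
  moreover have "(\<lambda>x. Aw w *v x + c) ` X \<subseteq> \<Union>F"
    using order.trans[OF image_mono[OF X] F(2)] .
  ultimately show ?thesis
    using F(1,4) by (intro exI[of _ F] conjI)
qed

text \<open>The cylinders of generation n cover the attractor; covering each of them efficiently
  bounds the content at a scale comparable to max_sv1 ^ n by a constant times svf_sum s n.\<close>

lemma hausdorff_content_self_affine_le:
  assumes X: "X = (\<Union>i<N. (\<lambda>x. A i *v x + v i) ` X)" "X \<subseteq> cball 0 R"
    and R: "R > 0" and s: "s \<ge> 0" and C: "\<And>n. svf_sum s n \<le> C" and \<delta>: "\<delta> > 0"
  shows "hausdorff_content s \<delta> X \<le> ennreal ((2 * (3 * R) powr s + (2 * R) powr s) * C)"
proof -
  let ?c = "2 * (3 * R) powr s + (2 * R) powr s"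
  obtain n where n: "max_sv1 ^ n < \<delta> / (3 * R)"
    using real_arch_pow_inv[of "\<delta> / (3 * R)" max_sv1] \<delta> R max_sv1_props by auto
  have "\<forall>w\<in>words N n. \<exists>F. finite F \<and> (\<lambda>x. Aw w *v x + word_translation A v w) ` X \<subseteq> \<Union>F \<and>
      (\<forall>U\<in>F. bounded U \<and> diameter U \<le> \<delta>) \<and> (\<Sum>U\<in>F. diam_pow s U) \<le> ?c * svf s (Aw w)"
  proof
    fix w assume "w \<in> words N n"
    moreover have "3 * R * max_sv1 ^ n < \<delta>"
      using n R by (simp add: pos_less_divide_eq mult.commute)
    ultimately show "\<exists>F. finite F \<and> (\<lambda>x. Aw w *v x + word_translation A v w) ` X \<subseteq> \<Union>F \<and>
      (\<forall>U\<in>F. bounded U \<and> diameter U \<le> \<delta>) \<and> (\<Sum>U\<in>F. diam_pow s U) \<le> ?c * svf s (Aw w)"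
      using words_subset_all_words by (intro cylinder_cover[OF X(2) R s]) (auto simp: words_def)
  qed
  then obtain Fw where Fw: "\<forall>w\<in>words N n. finite (Fw w) \<and>
      (\<lambda>x. Aw w *v x + word_translation A v w) ` X \<subseteq> \<Union>(Fw w) \<and>
      (\<forall>U\<in>Fw w. bounded U \<and> diameter U \<le> \<delta>) \<and> (\<Sum>U\<in>Fw w. diam_pow s U) \<le> ?c * svf s (Aw w)"
    by (rule bchoice[THEN exE])
  define F where "F = snd ` (SIGMA w:words N n. Fw w)"
  have finite: "finite (SIGMA w:words N n. Fw w)"
    using Fw by auto
  have "X \<subseteq> \<Union>F"
  proof
    fix x assume "x \<in> X"
    then obtain w where "w \<in> words N n" "x \<in> (\<lambda>x. Aw w *v x + word_translation A v w) ` X"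
      using self_affine_subset_word_images[OF X(1), of n] by blast
    then obtain U where "w \<in> words N n" "U \<in> Fw w" "x \<in> U"
      using Fw by blast
    then show "x \<in> \<Union>F"
      unfolding F_def by (intro UnionI[of U]) (auto intro: rev_image_eqI[of "(w, U)"])
  qed
  moreover have "bounded U \<and> diameter U \<le> \<delta>" if "U \<in> F" for U
    using that Fw by (auto simp: F_def)
  ultimately have "hausdorff_content s \<delta> X \<le> ennreal (\<Sum>U\<in>F. diam_pow s U)"
    using finite \<delta> unfolding F_def by (intro hausdorff_content_le_finite_cover) auto
  also have "(\<Sum>U\<in>F. diam_pow s U) \<le> (\<Sum>w\<in>words N n. \<Sum>U\<in>Fw w. diam_pow s U)"
    unfolding F_def using sum_image_le[OF finite, of "diam_pow s" snd] Fw
    by (simp add: diam_pow_nonneg sum.Sigma split_def)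
  also have "\<dots> \<le> ?c * svf_sum s n"
    unfolding svf_sum_def sum_distrib_left using Fw by (intro sum_mono) blast
  also have "\<dots> \<le> ?c * C"
    using C by (intro mult_left_mono) auto
  finally show ?thesis
    by (simp add: ennreal_leI)
qed

end

theorem mainTheorem12:
  fixes N :: nat and A :: "nat \<Rightarrow> real^2^2" and v :: "nat \<Rightarrow> real^2"
    and X :: "(real^2) set"
  assumes "is_self_affine_set N A v X"
    and "dominated N A \<or> irreducible_tuple N A"
  shows "hausdorff_measure (affinity_dim N A) X < \<infinity>"
proof -
  have ifs: "affine_ifs N A v" "compact X" "X = (\<Union>i<N. (\<lambda>x. A i *v x + v i) ` X)"
    using assms(1) unfolding is_self_affine_set_def by blast+
  interpret contracting_tuple N A
    using ifs(1) sv1_le_opnorm invertible_det_nz unfolding affine_ifs_def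
    by unfold_locales (auto intro: le_less_trans)
  interpret quasi_multiplicative_tuple N A
    using quasi_multiplicative_if_dominated_or_irreducible[OF assms(2)] by unfold_locales
  define s where "s = affinity_dim N A"
  obtain C where C: "\<And>n. svf_sum s n \<le> C"
    using svf_sum_affinity_dim_bounded unfolding s_def by blast
  obtain R where R: "R > 0" "X \<subseteq> cball 0 R"
    using compact_imp_bounded[OF ifs(2)] unfolding bounded_pos by (auto simp: subset_iff)
  have "hausdorff_measure s X \<le> ennreal ((2 * (3 * R) powr s + (2 * R) powr s) * C)"
    unfolding hausdorff_measure_def using affinity_dim_root(1) ifs(3) R C
    by (intro SUP_least hausdorff_content_self_affine_le) (auto simp: s_def)
  then show ?thesis
    unfolding s_def by (simp add: order.strict_trans1)
qed

end
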